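(* Let $(\mathcal{F}_n:n\geq0)$ be the dyadic filtration on $[0,1]$, let $(m_k:k\geq1)$ be an increasing sequence of nonnegative integers, and let $s\geq0$ be an integer. For each $k$, let $T_k$ be a sublinear operator acting on $\mathcal{F}_{m_k}$-measurable functions, with values in functions on $[0,1]$. Assume the following two conditions. (i) $\|T_k f\|_{L^1[0,1]}\leq C_1\|f\|_{L^1[0,1]}$ for every $\mathcal{F}_{m_k}$-measurable $f$ and every $k$. (ii) $\|T_kf\|_{L^2}\leq C_2|I|^{1/2}\|f\|_{L^2}$ whenever the following all hold: $f$ is $\mathcal{F}_{m_k}$-measurable; $f$ is supported on a dyadic interval $I$ of length $2^{-m}$; and there exists $j$ with $m\leq m_j$ and $k\geq j+s$. Then for every sequence $(f_k:k\geq1)$ with each $f_k$ being $\mathcal{F}_{m_k}$-measurable, $$\big\|(T_kf_k:k\geq1)\big\|_{\mathrm{ind}}\leq c\,\big(C_1s^{1/2}+C_2\big)\,\Big\|\Big(\sum_{k\geq1}|f_k|^2\Big)^{1/2}\Big\|_{L^1[0,1]},$$ where $c$ is an absolute constant.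
   Context: The dyadic filtration: $\mathcal{F}_n$ is the $\sigma$-algebra on $[0,1]$ generated by the intervals $[j2^{-n},(j+1)2^{-n})$, and $[0,1]$ carries Lebesgue measure $\mu$. For a sequence $(g_k:k\geq1)$ of functions in $L^1(\Omega,\mu)$, define $$\|(g_k)\|_{\mathrm{ind}}=\int_{\Omega^\infty}\sqrt{\sum_{k\geq1}|g_k(\omega_k)|^2}\,d\mu^{\otimes\infty}(\omega).$$ Here $\omega=(\omega_1,\omega_2,\dots)$, so each $g_k$ is evaluated at an independent coordinate. An operator $T$ is sublinear if $|T(f+g)|\leq|Tf|+|Tg|$ and $|T(\lambda f)|=|\lambda||Tf|$. *)

theory Defs
  imports "HOL-Probability.Probability"
begin

definition unitI :: "real measure" where
  "unitI = restrict_space lborel {0..1}"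

definition dyadic_int :: "nat \<Rightarrow> nat \<Rightarrow> real set" where
  "dyadic_int n j = {real j / 2 ^ n ..< (real j + 1) / 2 ^ n}"

text \<open>F_n-measurability on [0,1]: the atoms of F_n are the dyadic intervals of
  length 2^-n together with the point 1, so a function is F_n-measurable iff it is
  constant on each dyadic interval of generation n (values off [0,1] are irrelevant).\<close>
definition dyadic_meas :: "nat \<Rightarrow> (real \<Rightarrow> real) \<Rightarrow> bool" where
  "dyadic_meas n f \<longleftrightarrow>
     (\<forall>j < 2 ^ n. \<forall>x \<in> dyadic_int n j. \<forall>y \<in> dyadic_int n j. f x = f y)"

definition esqrt :: "ennreal \<Rightarrow> ennreal" where
  "esqrt x = (if x = \<infinity> then \<infinity> else ennreal (sqrt (enn2real x)))"

definition L1n :: "(real \<Rightarrow> real) \<Rightarrow> ennreal" where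
  "L1n f = (\<integral>\<^sup>+ x. ennreal \<bar>f x\<bar> \<partial>unitI)"

definition L2n :: "(real \<Rightarrow> real) \<Rightarrow> ennreal" where
  "L2n f = esqrt (\<integral>\<^sup>+ x. ennreal ((f x)\<^sup>2) \<partial>unitI)"

definition sublinear_on :: "((real \<Rightarrow> real) \<Rightarrow> bool) \<Rightarrow> ((real \<Rightarrow> real) \<Rightarrow> (real \<Rightarrow> real)) \<Rightarrow> bool" where
  "sublinear_on P T \<longleftrightarrow>
     (\<forall>f g. P f \<longrightarrow> P g \<longrightarrow>
        (AE x in unitI. \<bar>T (\<lambda>y. f y + g y) x\<bar> \<le> \<bar>T f x\<bar> + \<bar>T g x\<bar>)) \<and>
     (\<forall>f c. P f \<longrightarrow> (AE x in unitI. \<bar>T (\<lambda>y. c * f y) x\<bar> = \<bar>c\<bar> * \<bar>T f x\<bar>))"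

text \<open>The norm ||(g_k : k >= 1)||_ind, each g_k evaluated at an independent coordinate
  (coordinate 0 of the product is unused).\<close>
definition ind_norm :: "(nat \<Rightarrow> real \<Rightarrow> real) \<Rightarrow> ennreal" where
  "ind_norm g = (\<integral>\<^sup>+ \<omega>. esqrt (\<Sum>k. ennreal ((g (Suc k) (\<omega> (Suc k)))\<^sup>2))
                    \<partial>(PiM UNIV (\<lambda>_. unitI)))"

definition sqfun_norm :: "(nat \<Rightarrow> real \<Rightarrow> real) \<Rightarrow> ennreal" where
  "sqfun_norm f = (\<integral>\<^sup>+ x. esqrt (\<Sum>k. ennreal ((f (Suc k) x)\<^sup>2)) \<partial>unitI)"

end

(*
  Write S for the square function of (f_k).  Split each f_k pointwise into a good part,
  where the square sum up to k is at most 5 times the square sum up to k - s, and a bad part.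
  Along the bad indices the square sum grows geometrically every s steps, so the bad parts
  satisfy sum_k |bad_k| <= 2 sqrt s S pointwise, and hypothesis (i) controls them in L^1.
  The good part of f_k is dominated by the square sum up to k - s, which is
  F_{m_{k-s}}-measurable; cutting it along the dyadic intervals of length 2^-m_{k-s} and
  applying (ii) to each piece gives ||T_k good_k||_2 <= C2 ||(E_{m_{k-s}} good_k^2)^(1/2)||_1,
  and a discrete form of Garsia's lemma bounds the l^2-sum of these by (2 sqrt 5 + 2) ||S||_1.
  On the product space the l^2-sum of independent coordinates is estimated in L^1 by its L^2
  norm, which turns these bounds into the claim with c = 7.  Everything is computed exactly on
  the 2^{m_N} atoms of F_{m_N}, and N tends to infinity by monotone convergence.
*)
theory Submission
  imports Defs
begin

section \<open>Square sums of real sequences\<close>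

definition sqsum :: "(nat \<Rightarrow> real) \<Rightarrow> nat \<Rightarrow> real" where
  "sqsum x k = (\<Sum>l<k. (x l)\<^sup>2)"

lemma sqsum_0 [simp]: "sqsum x 0 = 0"
  by (simp add: sqsum_def)

lemma sqsum_nonneg: "0 \<le> sqsum x k"
  unfolding sqsum_def by (intro sum_nonneg) auto

lemma sqsum_mono: "k \<le> k' \<Longrightarrow> sqsum x k \<le> sqsum x k'"
  unfolding sqsum_def by (intro sum_mono2) auto

lemma sqsum_split: "k \<le> k' \<Longrightarrow> sqsum x k' = sqsum x k + (\<Sum>l\<in>{k..<k'}. (x l)\<^sup>2)"
  unfolding sqsum_def lessThan_atLeast0 by (simp add: sum.atLeastLessThan_concat)

lemma sqsum_cong: "(\<And>l. l < k \<Longrightarrow> x l = y l) \<Longrightarrow> sqsum x k = sqsum y k"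
  unfolding sqsum_def by (intro sum.cong) auto

definition good_index :: "nat \<Rightarrow> (nat \<Rightarrow> real) \<Rightarrow> nat \<Rightarrow> bool" where
  "good_index s x i \<longleftrightarrow> sqsum x (Suc i) \<le> 5 * sqsum x (Suc i - s)"

lemma good_index_cong:
  assumes "\<And>l. l \<le> i \<Longrightarrow> x l = y l"
  shows "good_index s x i = good_index s y i"
proof -
  have "sqsum x k = sqsum y k" if "k \<le> Suc i" for k
    using assms that by (intro sqsum_cong) auto
  thus ?thesis by (simp add: good_index_def)
qed

lemma good_index_below_gap:
  assumes "i < s" "good_index s x i"
  shows "x i = 0"
proof -
  have "sqsum x i + (x i)\<^sup>2 \<le> 0"
    using assms by (simp add: good_index_def sqsum_def)
  hence "(x i)\<^sup>2 \<le> 0" using sqsum_nonneg[of x i] by linarith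
  thus ?thesis by simp
qed

lemma sqrt_diff_add_twice_sqrt_le:
  fixes X y :: real
  assumes "0 \<le> y" "5 * y < X"
  shows "sqrt (X - y) + 2 * sqrt y \<le> 2 * sqrt X"
proof -
  define a b where "a = sqrt (X - y)" and "b = sqrt y"
  have ab: "0 \<le> a" "0 \<le> b" "X = a * a + b * b"
    using assms by (auto simp: a_def b_def)
  have "(2 * b)\<^sup>2 \<le> a\<^sup>2" using assms by (simp add: a_def b_def power_mult_distrib)
  hence "2 * b \<le> a" using ab(1) by (rule power2_le_imp_le)
  hence "2 * (a * b) \<le> a * a" using mult_left_mono[OF _ ab(1)] by (simp add: mult.left_commute)
  have "(a + 2 * b)\<^sup>2 = a * a + 4 * (a * b) + 4 * (b * b)"
    by (simp add: power2_eq_square algebra_simps)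
  also have "\<dots> \<le> 4 * X"
    using \<open>2 * (a * b) \<le> a * a\<close> ab(3) zero_le_square[of a] by linarith
  also have "\<dots> = (2 * sqrt X)\<^sup>2" using assms by (simp add: power_mult_distrib)
  finally
  have "a + 2 * b \<le> 2 * sqrt X" by (rule power2_le_imp_le) (use assms in simp)
  thus ?thesis by (simp add: a_def b_def)
qed

lemma sum_abs_le_sqrt_card:
  fixes x :: "nat \<Rightarrow> real"
  shows "(\<Sum>i\<in>A. \<bar>x i\<bar>) \<le> sqrt (card A) * sqrt (\<Sum>i\<in>A. (x i)\<^sup>2)"
  using L2_set_mult_ineq[of x "\<lambda>_. 1" A] by (simp add: L2_set_def L2_set_constant mult.commute)

lemma bad_block_le:
  assumes bad: "\<not> good_index s x i"
  shows "(\<Sum>l\<in>{Suc i - s..<Suc i}. \<bar>x l\<bar>) + 2 * sqrt s * sqrt (sqsum x (Suc i - s))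
           \<le> 2 * sqrt s * sqrt (sqsum x (Suc i))"
proof -
  define t where "t = Suc i - s"
  have "(\<Sum>l\<in>{t..<Suc i}. \<bar>x l\<bar>) \<le> sqrt (card {t..<Suc i}) * sqrt (\<Sum>l\<in>{t..<Suc i}. (x l)\<^sup>2)"
    by (rule sum_abs_le_sqrt_card)
  also have "\<dots> = sqrt (card {t..<Suc i}) * sqrt (sqsum x (Suc i) - sqsum x t)"
    using sqsum_split[of t "Suc i" x] by (simp add: t_def)
  also have "\<dots> \<le> sqrt s * sqrt (sqsum x (Suc i) - sqsum x t)"
    by (intro mult_right_mono) (auto simp: t_def sqsum_mono)
  finally have "(\<Sum>l\<in>{t..<Suc i}. \<bar>x l\<bar>) + 2 * sqrt s * sqrt (sqsum x t)
      \<le> sqrt s * (sqrt (sqsum x (Suc i) - sqsum x t) + 2 * sqrt (sqsum x t))"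
    by (simp add: algebra_simps)
  also have "\<dots> \<le> sqrt s * (2 * sqrt (sqsum x (Suc i)))"
    using bad sqsum_nonneg[of x t]
    by (intro mult_left_mono sqrt_diff_add_twice_sqrt_le) (auto simp: good_index_def t_def)
  finally show ?thesis by (simp add: t_def)
qed

text \<open>At a bad index \<open>i\<close> the square sum more than quintuples between \<open>i + 1 - s\<close> and \<open>i + 1\<close>,
  which pays for the last \<open>s\<close> terms (\<open>bad_block_le\<close>); the earlier ones are handled by induction.\<close>
lemma sum_bad_terms_le:
  "(\<Sum>i<n. if good_index s x i then 0 else \<bar>x i\<bar>) \<le> 2 * sqrt s * sqrt (sqsum x n)"
proof (induction n rule: less_induct)
  case (less n)
  let ?b = "\<lambda>i. if good_index s x i then 0 else \<bar>x i\<bar>"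
  show ?case
  proof (cases n)
    case 0 thus ?thesis by simp
  next
    case (Suc i)
    show ?thesis
    proof (cases "good_index s x i")
      case True
      have "(\<Sum>l<n. ?b l) = (\<Sum>l<i. ?b l)" using True Suc by simp
      also have "\<dots> \<le> 2 * sqrt s * sqrt (sqsum x i)" using less.IH[of i] Suc by simp
      also have "\<dots> \<le> 2 * sqrt s * sqrt (sqsum x n)" using Suc sqsum_mono[of i n x] by (simp add: mult_left_mono)
      finally show ?thesis .
    next
      case False
      define t where "t = Suc i - s"
      have "s \<noteq> 0"
      proof
        assume "s = 0"
        thus False using False sqsum_nonneg[of x "Suc i"] by (simp add: good_index_def)
      qed
      hence "t < n" using Suc by (simp add: t_def)
      have "(\<Sum>l<n. ?b l) = (\<Sum>l<t. ?b l) + (\<Sum>l\<in>{t..<n}. ?b l)"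
        unfolding lessThan_atLeast0 using \<open>t < n\<close> by (intro sum.atLeastLessThan_concat[symmetric]) auto
      also have "\<dots> \<le> 2 * sqrt s * sqrt (sqsum x t) + (\<Sum>l\<in>{t..<n}. \<bar>x l\<bar>)"
        using less.IH[of t] \<open>t < n\<close> by (intro add_mono sum_mono) auto
      also have "\<dots> \<le> 2 * sqrt s * sqrt (sqsum x n)"
        using bad_block_le[OF False] unfolding Suc t_def by linarith
      finally show ?thesis .
    qed
  qed
qed

lemma avg_sum_bad_terms_le:
  fixes \<phi> :: "nat \<Rightarrow> nat \<Rightarrow> real"
  shows "(\<Sum>i<N. (\<Sum>j<2^L. \<bar>if good_index s (\<lambda>l. \<phi> l j) i then 0 else \<phi> i j\<bar>) / 2^L)
           \<le> 2 * sqrt s * ((\<Sum>j<2^L. sqrt (sqsum (\<lambda>l. \<phi> l j) N)) / 2^L)"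
proof -
  have "(\<Sum>i<N. (\<Sum>j<2^L. \<bar>if good_index s (\<lambda>l. \<phi> l j) i then 0 else \<phi> i j\<bar>) / 2^L)
      = (\<Sum>j<2^L. \<Sum>i<N. if good_index s (\<lambda>l. \<phi> l j) i then 0 else \<bar>\<phi> i j\<bar>) / 2^L"
    by (simp add: sum_divide_distrib[symmetric] sum.swap[of _ "{..<N}"] if_distrib)
  also have "\<dots> \<le> (\<Sum>j<2^L. 2 * sqrt s * sqrt (sqsum (\<lambda>l. \<phi> l j) N)) / 2^L"
    by (intro divide_right_mono sum_mono sum_bad_terms_le) simp
  finally show ?thesis by (simp add: sum_distrib_left)
qed

lemma good_terms_sq_sum_le:
  fixes x :: "nat \<Rightarrow> real"
  shows "(\<Sum>l<k. (if good_index s x l then x l else 0)\<^sup>2) \<le> 5 * sqsum x (k - s)"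
proof (induction k)
  case (Suc k)
  show ?case
  proof (cases "good_index s x k")
    case True
    have "(\<Sum>l<Suc k. (if good_index s x l then x l else 0)\<^sup>2) \<le> sqsum x (Suc k)"
      unfolding sqsum_def by (intro sum_mono) auto
    also have "\<dots> \<le> 5 * sqsum x (Suc k - s)" using True by (simp add: good_index_def)
    finally show ?thesis .
  next
    case False
    hence "(\<Sum>l<Suc k. (if good_index s x l then x l else 0)\<^sup>2)
        = (\<Sum>l<k. (if good_index s x l then x l else 0)\<^sup>2)" by simp
    also have "\<dots> \<le> 5 * sqsum x (k - s)" by (rule Suc.IH)
    also have "\<dots> \<le> 5 * sqsum x (Suc k - s)" using sqsum_mono[of "k - s" "Suc k - s" x] by simp
    finally show ?thesis .
  qed
qed simp

section \<open>Conditional expectations on the atoms of a dyadic \<open>\<sigma>\<close>-algebra\<close>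

text \<open>Functions on the \<open>2^L\<close> atoms of \<open>\<F>\<^sub>L\<close>, indexed by \<open>j < 2^L\<close>: \<open>block_const L n g\<close> says
  that \<open>g\<close> is \<open>\<F>\<^sub>n\<close>-measurable, and \<open>block_avg L n\<close> is the conditional expectation onto \<open>\<F>\<^sub>n\<close>.\<close>
definition block_const :: "nat \<Rightarrow> nat \<Rightarrow> (nat \<Rightarrow> real) \<Rightarrow> bool" where
  "block_const L n g \<longleftrightarrow> (\<forall>j j'. j div 2^(L-n) = j' div 2^(L-n) \<longrightarrow> g j = g j')"

definition block_avg :: "nat \<Rightarrow> nat \<Rightarrow> (nat \<Rightarrow> real) \<Rightarrow> nat \<Rightarrow> real" where
  "block_avg L n g j = (\<Sum>r<2^(L-n). g (j div 2^(L-n) * 2^(L-n) + r)) / 2^(L-n)"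

lemma block_const_block_avg: "block_const L n (block_avg L n g)"
  unfolding block_const_def block_avg_def by auto

lemma block_const_coarser:
  assumes "n \<le> n'" "n' \<le> L" "block_const L n g"
  shows "block_const L n' g"
  unfolding block_const_def
proof (intro allI impI)
  fix j j' :: nat
  assume h: "j div 2^(L-n') = j' div 2^(L-n')"
  have "(2::nat)^(L-n) = 2^(L-n') * 2^(n'-n)"
    using assms by (simp add: power_add[symmetric])
  hence "j div 2^(L-n) = j' div 2^(L-n)"
    by (simp add: div_mult2_eq h)
  thus "g j = g j'" using assms(3) unfolding block_const_def by blast
qed

lemma block_const_comp: "block_const L n g \<Longrightarrow> block_const L n (\<lambda>j. h (g j))"
  unfolding block_const_def by metis

lemma block_const_add: "block_const L n f \<Longrightarrow> block_const L n g \<Longrightarrow> block_const L n (\<lambda>j. f j + g j)"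
  unfolding block_const_def by metis

lemma block_const_sum:
  "(\<And>i. i \<in> I \<Longrightarrow> block_const L n (f i)) \<Longrightarrow> block_const L n (\<lambda>j. \<Sum>i\<in>I. f i j)"
  unfolding block_const_def by (metis (mono_tags, lifting) sum.cong)

lemma block_avg_nonneg: "(\<And>j. 0 \<le> g j) \<Longrightarrow> 0 \<le> block_avg L n g j"
  unfolding block_avg_def by (intro divide_nonneg_pos sum_nonneg) auto

lemma sum_pow2_blocks:
  fixes h :: "nat \<Rightarrow> 'a::comm_monoid_add"
  assumes "n \<le> L"
  shows "(\<Sum>j<2^L. h j) = (\<Sum>J<2^n. \<Sum>r<2^(L-n). h (J * 2^(L-n) + r))"
proof -
  have "(\<Sum>r<2^(L-n). h (J * 2^(L-n) + r)) = sum h {J * 2^(L-n)..<J * 2^(L-n) + 2^(L-n)}" for J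
    using sum.shift_bounds_nat_ivl[of h 0 "J * 2^(L-n)" "2^(L-n)"]
    by (simp add: add.commute atLeast0LessThan)
  hence "(\<Sum>J<2^n. \<Sum>r<2^(L-n). h (J * 2^(L-n) + r)) = sum h {..<2^n * 2^(L-n)}"
    by (simp add: sum.nat_group)
  thus ?thesis using assms by (simp add: power_add[symmetric])
qed

lemma sum_mult_block_avg:
  assumes "n \<le> L" "block_const L n w"
  shows "(\<Sum>j<2^L. w j * block_avg L n g j) = (\<Sum>j<2^L. w j * g j)"
proof -
  let ?d = "(2::nat)^(L-n)"
  have w: "w (J * ?d + r) = w (J * ?d)" if "r < ?d" for J r
    using assms(2) that unfolding block_const_def by simp
  have avg: "block_avg L n g (J * ?d + r) = (\<Sum>r'<?d. g (J * ?d + r')) / ?d" if "r < ?d" for J r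
    using that unfolding block_avg_def by simp
  have "(\<Sum>j<2^L. w j * block_avg L n g j)
      = (\<Sum>J<2^n. \<Sum>r<?d. w (J * ?d) * ((\<Sum>r'<?d. g (J * ?d + r')) / ?d))"
    unfolding sum_pow2_blocks[OF assms(1)] by (intro sum.cong refl) (simp add: w avg)
  also have "\<dots> = (\<Sum>J<2^n. w (J * ?d) * (\<Sum>r<?d. g (J * ?d + r)))"
    by simp
  also have "\<dots> = (\<Sum>J<2^n. \<Sum>r<?d. w (J * ?d + r) * g (J * ?d + r))"
    by (intro sum.cong refl) (simp add: w sum_distrib_left)
  also have "\<dots> = (\<Sum>j<2^L. w j * g j)"
    by (rule sum_pow2_blocks[OF assms(1), symmetric])
  finally show ?thesis .
qed

lemma sum_sqrt_block_avg:
  fixes g :: "nat \<Rightarrow> real"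
  assumes "n \<le> L" "\<And>j. 0 \<le> g j"
  shows "(\<Sum>J<2^n. sqrt (1 / 2^n) * sqrt ((\<Sum>r<2^(L-n). g (J * 2^(L-n) + r)) / 2^L))
       = (\<Sum>j<2^L. sqrt (block_avg L n g j)) / 2^L"
proof -
  let ?d = "(2::nat)^(L-n)"
  have dv: "(J * ?d + r) div ?d = J" if "r < ?d" for J r using that by simp
  have eL: "(2::real)^L = 2^n * 2^(L-n)" using assms(1) by (simp add: power_add[symmetric])
  have "(\<Sum>j<2^L. sqrt (block_avg L n g j)) = (\<Sum>J<2^n. \<Sum>r<?d. sqrt (block_avg L n g (J * ?d + r)))"
    by (rule sum_pow2_blocks[OF assms(1)])
  also have "\<dots> = (\<Sum>J<2^n. 2^(L-n) * sqrt ((\<Sum>r<?d. g (J * ?d + r)) / 2^(L-n)))"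
  proof (rule sum.cong[OF refl])
    fix J
    have "(\<Sum>r<?d. sqrt (block_avg L n g (J * ?d + r))) = (\<Sum>r<?d. sqrt ((\<Sum>r'<?d. g (J * ?d + r')) / 2^(L-n)))"
    proof (rule sum.cong[OF refl])
      fix r assume "r \<in> {..<?d}"
      hence "r < ?d" by simp
      thus "sqrt (block_avg L n g (J * ?d + r)) = sqrt ((\<Sum>r'<?d. g (J * ?d + r')) / 2^(L-n))"
        unfolding block_avg_def using dv by simp
    qed
    thus "(\<Sum>r<?d. sqrt (block_avg L n g (J * ?d + r))) = 2^(L-n) * sqrt ((\<Sum>r<?d. g (J * ?d + r)) / 2^(L-n))"
      by simp
  qed
  finally have e1: "(\<Sum>j<2^L. sqrt (block_avg L n g j)) / 2^L = (\<Sum>J<2^n. 2^(L-n) * sqrt ((\<Sum>r<?d. g (J * ?d + r)) / 2^(L-n)) / 2^L)"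
    by (simp add: sum_divide_distrib)
  have e2: "sqrt (1 / 2^n) * sqrt (X / 2^L) = 2^(L-n) * sqrt (X / 2^(L-n)) / 2^L" if X: "0 \<le> X" for X :: real
  proof -
    define p :: real where "p = 2^n"
    define d :: real where "d = 2^(L-n)"
    have p: "p > 0" and d: "d > 0" by (auto simp: p_def d_def)
    have L: "(2::real)^L = p * d" unfolding p_def d_def eL ..
    have "sqrt (1 / p) * sqrt (X / (p*d)) = sqrt (X / (p * p * d))"
      by (simp add: real_sqrt_mult[symmetric] mult_ac)
    also have "X / (p * p * d) = (d * d) * (X / d) / ((p * d) * (p * d))"
      using p d by (simp add: field_simps)
    also have "sqrt \<dots> = d * sqrt (X / d) / (p * d)"
      using p d X by (simp add: real_sqrt_mult real_sqrt_divide)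
    finally show ?thesis unfolding L by (simp add: p_def d_def)
  qed
  show ?thesis unfolding e1
    by (intro sum.cong refl e2 sum_nonneg) (use assms(2) in auto)
qed

lemma sqrt_diff_bounds:
  fixes p q :: real
  assumes "0 \<le> p" "p \<le> q"
  shows "sqrt q - sqrt p \<le> (q - p) / sqrt q" and "(q - p) / sqrt q \<le> 2 * (sqrt q - sqrt p)"
proof -
  have "sqrt q - sqrt p \<le> (q - p) / sqrt q \<and> (q - p) / sqrt q \<le> 2 * (sqrt q - sqrt p)"
  proof (cases "q = 0")
    case True thus ?thesis using assms by simp
  next
    case False
    hence sq: "sqrt q > 0" using assms by simp
    have sp: "0 \<le> sqrt p" "sqrt p \<le> sqrt q" using assms by auto
    have e: "q - p = (sqrt q - sqrt p) * (sqrt q + sqrt p)"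
      using assms by (simp add: algebra_simps)
    have "(sqrt q - sqrt p) * sqrt q \<le> (sqrt q - sqrt p) * (sqrt q + sqrt p)"
      using sp by (intro mult_left_mono) auto
    moreover have "(sqrt q - sqrt p) * (sqrt q + sqrt p) \<le> (sqrt q - sqrt p) * (2 * sqrt q)"
      using sp by (intro mult_left_mono) auto
    ultimately show ?thesis using sq unfolding e
      by (simp add: pos_le_divide_eq pos_divide_le_eq mult_ac)
  qed
  thus "sqrt q - sqrt p \<le> (q - p) / sqrt q" "(q - p) / sqrt q \<le> 2 * (sqrt q - sqrt p)" by auto
qed

lemma sqrt_le_sum_increments_div_sqrt:
  fixes y :: "nat \<Rightarrow> real"
  assumes "\<And>k. 0 \<le> y k" "\<And>k. y k \<le> y (Suc k)"
  shows "sqrt (y n) - sqrt (y 0) \<le> (\<Sum>i<n. (y (Suc i) - y i) / sqrt (y (Suc i)))"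
proof (induction n)
  case (Suc n)
  thus ?case using sqrt_diff_bounds(1)[OF assms(1)[of n] assms(2)[of n]] by simp
qed simp

lemma sum_increments_div_sqrt_le:
  fixes y :: "nat \<Rightarrow> real"
  assumes "\<And>k. 0 \<le> y k" "\<And>k. y k \<le> y (Suc k)"
  shows "(\<Sum>i<n. (y (Suc i) - y i) / sqrt (y (Suc i))) \<le> 2 * sqrt (y n) - 2 * sqrt (y 0)"
proof (induction n)
  case (Suc n)
  thus ?case using sqrt_diff_bounds(2)[OF assms(1)[of n] assms(2)[of n]] by simp
qed simp

text \<open>With \<open>z\<^sub>k = \<Sum>\<^sub>l\<^sub><\<^sub>k b\<^sub>l + Q\<^sub>k\<close> the left side is at most \<open>sqrt z\<^sub>N\<close>, which telescopes into
  increments of \<open>z\<close> weighted by \<open>1 / sqrt z\<close>; the increments of \<open>Q\<close> telescope back.\<close>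
lemma sqrt_sum_le_weighted_sum:
  fixes b Q :: "nat \<Rightarrow> real"
  assumes b: "\<And>i. 0 \<le> b i"
    and Q: "\<And>k. 0 \<le> Q k" "Q 0 = 0" "\<And>k. Q k \<le> Q (Suc k)"
  defines "z \<equiv> \<lambda>k. (\<Sum>l<k. b l) + Q k"
  shows "sqrt (\<Sum>i<N. b i) \<le> (\<Sum>i<N. b i / sqrt (z (Suc i))) + 2 * sqrt (Q N)"
proof -
  have z0: "0 \<le> z k" for k unfolding z_def using b Q by (intro add_nonneg_nonneg sum_nonneg) auto
  have zmono: "z k \<le> z (Suc k)" for k unfolding z_def using b[of k] Q(3)[of k] by simp
  have Qz: "Q k \<le> z k" for k unfolding z_def using b by (simp add: sum_nonneg)
  have "sqrt (\<Sum>i<N. b i) \<le> sqrt (z N) - sqrt (z 0)" unfolding z_def using Q by simp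
  also have "\<dots> \<le> (\<Sum>i<N. (z (Suc i) - z i) / sqrt (z (Suc i)))"
    by (rule sqrt_le_sum_increments_div_sqrt) (use z0 zmono in auto)
  also have "\<dots> = (\<Sum>i<N. b i / sqrt (z (Suc i)) + (Q (Suc i) - Q i) / sqrt (z (Suc i)))"
    by (intro sum.cong refl) (simp add: z_def add_divide_distrib)
  also have "\<dots> \<le> (\<Sum>i<N. b i / sqrt (z (Suc i)) + (Q (Suc i) - Q i) / sqrt (Q (Suc i)))"
  proof (intro sum_mono add_left_mono)
    fix i
    show "(Q (Suc i) - Q i) / sqrt (z (Suc i)) \<le> (Q (Suc i) - Q i) / sqrt (Q (Suc i))"
    proof (cases "Q (Suc i) = 0")
      case False thus ?thesis using Q(1,3)[of i] Q(1)[of "Suc i"] Qz[of "Suc i"]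
        by (intro divide_left_mono) auto
    qed (use Q(1,3)[of i] in simp)
  qed
  also have "\<dots> \<le> (\<Sum>i<N. b i / sqrt (z (Suc i))) + (2 * sqrt (Q N) - 2 * sqrt (Q 0))"
    unfolding sum.distrib by (intro add_left_mono sum_increments_div_sqrt_le) (use Q in auto)
  finally show ?thesis using Q(2) by simp
qed

lemma weighted_sum_le_sqrt:
  fixes a z :: "nat \<Rightarrow> real"
  assumes a: "\<And>i. 0 \<le> a i" and c: "0 < c"
    and az: "\<And>k. k \<le> N \<Longrightarrow> (\<Sum>l<k. a l) \<le> c * z k"
  shows "(\<Sum>i<N. a i / sqrt (z (Suc i))) \<le> 2 * sqrt c * sqrt (\<Sum>l<N. a l)"
proof -
  define A where "A k = (\<Sum>l<k. a l)" for k
  have A0: "0 \<le> A k" for k unfolding A_def using a by (simp add: sum_nonneg)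
  have AS: "A (Suc i) = A i + a i" for i unfolding A_def by simp
  have step: "a i / sqrt (z (Suc i)) \<le> sqrt c * ((A (Suc i) - A i) / sqrt (A (Suc i)))"
    if "i < N" for i
  proof (cases "a i = 0")
    case False
    hence Apos: "0 < A (Suc i)" using a[of i] A0[of i] AS[of i] by simp
    have "A (Suc i) \<le> c * z (Suc i)" using az[of "Suc i"] that by (simp add: A_def)
    hence le: "sqrt (A (Suc i)) \<le> sqrt c * sqrt (z (Suc i))"
      by (metis real_sqrt_le_mono real_sqrt_mult)
    hence "0 < sqrt c * sqrt (z (Suc i))" using real_sqrt_gt_zero[OF Apos] by linarith
    hence "a i / sqrt (z (Suc i)) = a i * sqrt c / (sqrt c * sqrt (z (Suc i)))" using c by simp
    also have "\<dots> \<le> a i * sqrt c / sqrt (A (Suc i))"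
      using le a[of i] c Apos \<open>0 < sqrt c * sqrt (z (Suc i))\<close> by (intro divide_left_mono) auto
    also have "\<dots> = sqrt c * ((A (Suc i) - A i) / sqrt (A (Suc i)))" using AS[of i] by simp
    finally show ?thesis .
  qed (use AS in simp)
  have "(\<Sum>i<N. a i / sqrt (z (Suc i))) \<le> sqrt c * (\<Sum>i<N. (A (Suc i) - A i) / sqrt (A (Suc i)))"
    unfolding sum_distrib_left by (intro sum_mono step) simp
  also have "\<dots> \<le> sqrt c * (2 * sqrt (A N) - 2 * sqrt (A 0))"
    by (intro mult_left_mono sum_increments_div_sqrt_le) (use A0 AS a c in auto)
  finally show ?thesis by (simp add: A_def)
qed

lemma block_const_garsia_weight:
  assumes i: "i < N" and nL: "\<And>i. i < N \<Longrightarrow> n i \<le> L"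
    and nmono: "\<And>l i. l \<le> i \<Longrightarrow> i < N \<Longrightarrow> n l \<le> n i"
    and Q: "block_const L (n i) Q"
  shows "block_const L (n i) (\<lambda>j. 1 / sqrt ((\<Sum>l<Suc i. block_avg L (n l) (a l) j) + Q j))"
proof -
  have "block_const L (n i) (block_avg L (n l) (a l))" if "l < Suc i" for l
    using that i by (intro block_const_coarser[OF nmono nL[OF i] block_const_block_avg]) auto
  hence "block_const L (n i) (\<lambda>j. (\<Sum>l<Suc i. block_avg L (n l) (a l) j) + Q j)"
    by (intro block_const_add block_const_sum Q) auto
  thus ?thesis by (rule block_const_comp)
qed

text \<open>A discrete form of Garsia's lemma.  The weights \<open>1 / sqrt z\<^sub>i\<^sub>+\<^sub>1\<close> are \<open>\<F>\<^bsub>n i\<^esub>\<close>-measurable,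
  so the conditional expectations can be moved from \<open>block_avg L (n i) (a i)\<close> onto \<open>a i\<close>.\<close>
lemma garsia_block_avg:
  fixes a Q :: "nat \<Rightarrow> nat \<Rightarrow> real" and n :: "nat \<Rightarrow> nat" and Z :: "nat \<Rightarrow> real"
  assumes nL: "\<And>i. i < N \<Longrightarrow> n i \<le> L"
    and nmono: "\<And>l i. l \<le> i \<Longrightarrow> i < N \<Longrightarrow> n l \<le> n i"
    and a: "\<And>i j. 0 \<le> a i j"
    and Q: "\<And>k j. 0 \<le> Q k j" "\<And>j. Q 0 j = 0" "\<And>k j. Q k j \<le> Q (Suc k) j"
    and Q_block: "\<And>i. i < N \<Longrightarrow> block_const L (n i) (Q (Suc i))"
    and c: "0 < c" and aQ: "\<And>k j. k \<le> N \<Longrightarrow> (\<Sum>l<k. a l j) \<le> c * Q k j"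
    and QZ: "\<And>j. Q N j \<le> Z j" and aZ: "\<And>j. (\<Sum>l<N. a l j) \<le> Z j"
  shows "(\<Sum>j<2^L. sqrt (\<Sum>i<N. block_avg L (n i) (a i) j))
           \<le> (2 * sqrt c + 2) * (\<Sum>j<2^L. sqrt (Z j))"
proof -
  define b where "b i = block_avg L (n i) (a i)" for i
  have b0: "0 \<le> b i j" for i j unfolding b_def by (intro block_avg_nonneg a)
  define z where "z k j = (\<Sum>l<k. b l j) + Q k j" for k j
  define w where "w i j = 1 / sqrt (z (Suc i) j)" for i j
  have w_block: "block_const L (n i) (w i)" if "i < N" for i
    unfolding w_def[abs_def] z_def b_def using that nL nmono Q_block[OF that]
    by (rule block_const_garsia_weight)
  have "(\<Sum>j<2^L. sqrt (\<Sum>i<N. b i j)) \<le> (\<Sum>j<2^L. (\<Sum>i<N. w i j * b i j) + 2 * sqrt (Z j))"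
  proof (intro sum_mono)
    fix j
    have "sqrt (\<Sum>i<N. b i j) \<le> (\<Sum>i<N. b i j / sqrt (z (Suc i) j)) + 2 * sqrt (Q N j)"
      unfolding z_def by (rule sqrt_sum_le_weighted_sum) (use b0 Q in auto)
    also have "\<dots> \<le> (\<Sum>i<N. w i j * b i j) + 2 * sqrt (Z j)"
      using QZ[of j] by (simp add: w_def)
    finally show "sqrt (\<Sum>i<N. b i j) \<le> (\<Sum>i<N. w i j * b i j) + 2 * sqrt (Z j)" .
  qed
  also have "\<dots> = (\<Sum>i<N. \<Sum>j<2^L. w i j * b i j) + 2 * (\<Sum>j<2^L. sqrt (Z j))"
    by (simp add: sum.distrib sum_distrib_left sum.swap[of _ "{..<N}"])
  also have "(\<Sum>i<N. \<Sum>j<2^L. w i j * b i j) = (\<Sum>j<2^L. \<Sum>i<N. a i j / sqrt (z (Suc i) j))"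
    unfolding b_def using sum_mult_block_avg[OF nL w_block]
    by (simp add: sum.swap[of _ "{..<N}"] w_def)
  also have "\<dots> \<le> (\<Sum>j<2^L. 2 * sqrt c * sqrt (Z j))"
  proof (intro sum_mono)
    fix j
    have "(\<Sum>i<N. a i j / sqrt (z (Suc i) j)) \<le> 2 * sqrt c * sqrt (\<Sum>l<N. a l j)"
    proof (rule weighted_sum_le_sqrt[OF a c])
      fix k assume "k \<le> N"
      moreover have "0 \<le> c * (\<Sum>l<k. b l j)" using c b0 by (simp add: sum_nonneg)
      ultimately show "(\<Sum>l<k. a l j) \<le> c * z k j"
        using aQ[of k j] unfolding z_def distrib_left by linarith
    qed
    also have "\<dots> \<le> 2 * sqrt c * sqrt (Z j)" using aZ[of j] c by simp
    finally show "(\<Sum>i<N. a i j / sqrt (z (Suc i) j)) \<le> 2 * sqrt c * sqrt (Z j)" .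
  qed
  also have "(\<Sum>j<2^L. 2 * sqrt c * sqrt (Z j)) + 2 * (\<Sum>j<2^L. sqrt (Z j))
      = (2 * sqrt c + 2) * (\<Sum>j<2^L. sqrt (Z j))"
    by (simp add: sum_distrib_left sum.distrib distrib_right)
  finally show ?thesis by (simp add: b_def)
qed

lemma L2_set_sum_le:
  fixes h :: "'a \<Rightarrow> 'b \<Rightarrow> real"
  shows "L2_set (\<lambda>i. \<Sum>j\<in>J. h i j) I \<le> (\<Sum>j\<in>J. L2_set (\<lambda>i. h i j) I)"
proof (induction J rule: infinite_finite_induct)
  case (infinite A) thus ?case by (simp add: L2_set_def)
next
  case empty thus ?case by (simp add: L2_set_def)
next
  case (insert x F)
  have "L2_set (\<lambda>i. \<Sum>j\<in>insert x F. h i j) I = L2_set (\<lambda>i. h i x + (\<Sum>j\<in>F. h i j)) I"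
    using insert by simp
  also have "\<dots> \<le> L2_set (\<lambda>i. h i x) I + L2_set (\<lambda>i. \<Sum>j\<in>F. h i j) I"
    by (rule L2_set_triangle_ineq)
  also have "\<dots> \<le> L2_set (\<lambda>i. h i x) I + (\<Sum>j\<in>F. L2_set (\<lambda>i. h i j) I)"
    using insert by simp
  finally show ?case using insert by simp
qed

lemma sqrt_sum_sq_avg_le_avg_sqrt_sum:
  fixes c :: "nat \<Rightarrow> nat \<Rightarrow> real" and d :: real
  assumes c: "\<And>i j. 0 \<le> c i j" and d: "0 < d"
  shows "sqrt (\<Sum>i<N. ((\<Sum>j<K. sqrt (c i j)) / d)\<^sup>2) \<le> (\<Sum>j<K. sqrt (\<Sum>i<N. c i j)) / d"
proof -
  have "sqrt (\<Sum>i<N. ((\<Sum>j<K. sqrt (c i j)) / d)\<^sup>2) = L2_set (\<lambda>i. \<Sum>j<K. sqrt (c i j) / d) {..<N}"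
    unfolding L2_set_def by (simp add: sum_divide_distrib)
  also have "\<dots> \<le> (\<Sum>j<K. L2_set (\<lambda>i. sqrt (c i j) / d) {..<N})"
    by (rule L2_set_sum_le)
  also have "\<dots> = (\<Sum>j<K. L2_set (\<lambda>i. sqrt (c i j)) {..<N} * (1 / d))"
  proof (intro sum.cong refl)
    fix j
    show "L2_set (\<lambda>i. sqrt (c i j) / d) {..<N} = L2_set (\<lambda>i. sqrt (c i j)) {..<N} * (1 / d)"
      using L2_set_left_distrib[of "1 / d" "\<lambda>i. sqrt (c i j)" "{..<N}"] d by simp
  qed
  also have "\<dots> = (\<Sum>j<K. sqrt (\<Sum>i<N. c i j)) / d"
    unfolding L2_set_def using c by (simp add: sum_divide_distrib)
  finally show ?thesis .
qed

text \<open>Minkowski's inequality reduces this to Garsia's lemma with \<open>Q\<^sub>k = sqsum (k - s)\<close>;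
  goodness enters through \<open>good_terms_sq_sum_le\<close>.\<close>
lemma good_terms_block_avg_le:
  fixes \<phi> :: "nat \<Rightarrow> nat \<Rightarrow> real" and M :: "nat \<Rightarrow> nat" and s :: nat
  assumes M_le: "\<And>i. i < N \<Longrightarrow> M i \<le> L"
    and M: "\<And>l i. l \<le> i \<Longrightarrow> M l \<le> M i"
    and \<phi>: "\<And>i. i < N \<Longrightarrow> block_const L (M i) (\<phi> i)"
  defines "v \<equiv> \<lambda>i j. if good_index s (\<lambda>l. \<phi> l j) i then \<phi> i j else 0"
  shows "sqrt (\<Sum>i<N. ((\<Sum>j<2^L. sqrt (block_avg L (M (i - s)) (\<lambda>j. (v i j)\<^sup>2) j)) / 2^L)\<^sup>2)
           \<le> (2 * sqrt 5 + 2) * ((\<Sum>j<2^L. sqrt (sqsum (\<lambda>l. \<phi> l j) N)) / 2^L)"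
proof -
  define n where "n i = M (i - s)" for i
  define a where "a i j = (v i j)\<^sup>2" for i j
  have nL: "n i \<le> L" if "i < N" for i using M_le[of "i - s"] that unfolding n_def by simp
  have "sqrt (\<Sum>i<N. ((\<Sum>j<2^L. sqrt (block_avg L (n i) (a i) j)) / 2^L)\<^sup>2)
      \<le> (\<Sum>j<2^L. sqrt (\<Sum>i<N. block_avg L (n i) (a i) j)) / 2^L"
    by (rule sqrt_sum_sq_avg_le_avg_sqrt_sum) (simp_all add: block_avg_nonneg a_def)
  also have "\<dots> \<le> (2 * sqrt 5 + 2) * (\<Sum>j<2^L. sqrt (sqsum (\<lambda>l. \<phi> l j) N)) / 2^L"
  proof (intro divide_right_mono)
    show "(\<Sum>j<2^L. sqrt (\<Sum>i<N. block_avg L (n i) (a i) j))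
        \<le> (2 * sqrt 5 + 2) * (\<Sum>j<2^L. sqrt (sqsum (\<lambda>l. \<phi> l j) N))"
    proof (rule garsia_block_avg[where Q = "\<lambda>k j. sqsum (\<lambda>l. \<phi> l j) (k - s)" and c = 5])
      show "n i \<le> L" if "i < N" for i using nL[OF that] .
      show "n l \<le> n i" if "l \<le> i" for l i unfolding n_def using that by (intro M) simp
      show "0 \<le> a i j" for i j unfolding a_def by simp
      show "0 \<le> sqsum (\<lambda>l. \<phi> l j) (k - s)" for k j by (rule sqsum_nonneg)
      show "sqsum (\<lambda>l. \<phi> l j) (0 - s) = 0" for j by simp
      show "sqsum (\<lambda>l. \<phi> l j) (k - s) \<le> sqsum (\<lambda>l. \<phi> l j) (Suc k - s)" for k j
        by (intro sqsum_mono) simp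
      show "block_const L (n i) (\<lambda>j. sqsum (\<lambda>l. \<phi> l j) (Suc i - s))" if i: "i < N" for i
        unfolding sqsum_def
      proof (rule block_const_sum)
        fix l assume "l \<in> {..<Suc i - s}"
        hence l: "l \<le> i - s" "l < N" using i by auto
        have "M (i - s) \<le> L" using M_le[of "i - s"] i by simp
        hence "block_const L (n i) (\<phi> l)"
          unfolding n_def using block_const_coarser[OF M[OF l(1)] _ \<phi>[OF l(2)]] by blast
        thus "block_const L (n i) (\<lambda>j. (\<phi> l j)\<^sup>2)" by (rule block_const_comp)
      qed
      show "(0::real) < 5" by simp
      show "(\<Sum>l<k. a l j) \<le> 5 * sqsum (\<lambda>l. \<phi> l j) (k - s)" for k j
        unfolding a_def v_def by (rule good_terms_sq_sum_le)
      show "sqsum (\<lambda>l. \<phi> l j) (N - s) \<le> sqsum (\<lambda>l. \<phi> l j) N" for j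
        by (intro sqsum_mono) simp
      show "(\<Sum>l<N. a l j) \<le> sqsum (\<lambda>l. \<phi> l j) N" for j
        unfolding a_def v_def sqsum_def by (intro sum_mono) auto
    qed
  qed simp
  finally show ?thesis by (simp add: n_def a_def[abs_def])
qed

section \<open>Dyadic intervals\<close>

definition dyadic_index :: "nat \<Rightarrow> real \<Rightarrow> nat" where
  "dyadic_index n x = nat \<lfloor>x * 2^n\<rfloor>"

lemma mem_dyadic_int_iff: "x \<in> dyadic_int n j \<longleftrightarrow> 0 \<le> x \<and> \<lfloor>x * 2^n\<rfloor> = int j"
proof -
  have p: "(0::real) < 2^n" by simp
  have "x \<in> dyadic_int n j \<longleftrightarrow> real j \<le> x * 2^n \<and> x * 2^n < real j + 1"
    unfolding dyadic_int_def using p by (simp add: pos_divide_le_eq pos_less_divide_eq)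
  also have "\<dots> \<longleftrightarrow> \<lfloor>x * 2^n\<rfloor> = int j" by (simp add: floor_eq_iff)
  also have "\<dots> \<longleftrightarrow> 0 \<le> x \<and> \<lfloor>x * 2^n\<rfloor> = int j"
  proof
    assume h: "\<lfloor>x * 2^n\<rfloor> = int j"
    hence "0 \<le> \<lfloor>x * 2^n\<rfloor>" by simp
    hence "0 \<le> x * 2^n" by simp
    thus "0 \<le> x \<and> \<lfloor>x * 2^n\<rfloor> = int j" using h p by (simp add: zero_le_mult_iff)
  qed simp
  finally show ?thesis .
qed

lemma dyadic_index_mem: "0 \<le> x \<Longrightarrow> x \<in> dyadic_int n (dyadic_index n x)"
  unfolding mem_dyadic_int_iff dyadic_index_def by simp

lemma dyadic_index_eqI: "x \<in> dyadic_int n j \<Longrightarrow> dyadic_index n x = j"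
  unfolding mem_dyadic_int_iff dyadic_index_def by simp

lemma dyadic_int_subset: "j < 2^n \<Longrightarrow> dyadic_int n j \<subseteq> {0..<1}"
proof
  fix x assume j: "j < 2^n" and x: "x \<in> dyadic_int n j"
  have "j + 1 \<le> 2^n" using j by simp
  hence "real (j + 1) \<le> real (2^n)" by (simp only: of_nat_le_iff)
  hence "real j + 1 \<le> 2^n" by simp
  hence "(real j + 1) / 2^n \<le> 1" by simp
  moreover have "0 \<le> x" using x mem_dyadic_int_iff by blast
  moreover have "x < (real j + 1) / 2^n" using x unfolding dyadic_int_def by auto
  ultimately have "x < 1" by linarith
  thus "x \<in> {0..<1}" using \<open>0 \<le> x\<close> by simp
qed

lemma dyadic_index_less: "0 \<le> x \<Longrightarrow> x < 1 \<Longrightarrow> dyadic_index n x < 2^n"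
proof -
  assume x: "0 \<le> x" "x < 1"
  have "x * 2^n < 2^n" using x by simp
  hence "\<lfloor>x * 2^n\<rfloor> < 2^n" using floor_less_iff[of "x * 2^n" "2^n"] by simp
  moreover have "0 \<le> \<lfloor>x * 2^n\<rfloor>" using x by simp
  ultimately have "nat \<lfloor>x * 2^n\<rfloor> < nat (2^n)" by (simp add: nat_less_eq_zless)
  thus ?thesis unfolding dyadic_index_def by (simp add: nat_power_eq)
qed

lemma dyadic_meas_iff: "dyadic_meas n f \<longleftrightarrow>
   (\<forall>x y. 0 \<le> x \<longrightarrow> x < 1 \<longrightarrow> 0 \<le> y \<longrightarrow> y < 1 \<longrightarrow> dyadic_index n x = dyadic_index n y \<longrightarrow> f x = f y)"
  unfolding dyadic_meas_def
proof safe
  fix x y assume h: "\<forall>j<2^n. \<forall>x\<in>dyadic_int n j. \<forall>y\<in>dyadic_int n j. f x = f y"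
    and x: "0 \<le> x" "x < 1" and y: "0 \<le> y" "y < 1" and e: "dyadic_index n x = dyadic_index n y"
  show "f x = f y" using h[rule_format, OF dyadic_index_less[OF x], OF dyadic_index_mem[OF x(1)]] dyadic_index_mem[OF y(1)] e by simp
next
  fix j x y assume h: "\<forall>x y. 0 \<le> x \<longrightarrow> x < 1 \<longrightarrow> 0 \<le> y \<longrightarrow> y < 1 \<longrightarrow> dyadic_index n x = dyadic_index n y \<longrightarrow> f x = f y"
    and j: "j < 2^n" and x: "x \<in> dyadic_int n j" and y: "y \<in> dyadic_int n j"
  have "x \<in> {0..<1}" "y \<in> {0..<1}" using dyadic_int_subset[OF j] x y by auto
  thus "f x = f y" using h dyadic_index_eqI[OF x] dyadic_index_eqI[OF y] by auto
qed

lemma dyadic_index_coarser: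
  assumes "0 \<le> x" "n \<le> L"
  shows "dyadic_index n x = dyadic_index L x div 2^(L-n)"
proof -
  have e: "(2::real)^L = 2^n * 2^(L-n)" using assms(2) by (simp add: power_add[symmetric])
  have "x * 2^n = (x * 2^L) / real_of_int (2^(L-n))" unfolding e by simp
  hence "\<lfloor>x * 2^n\<rfloor> = \<lfloor>x * 2^L\<rfloor> div 2^(L-n)"
    using floor_divide_real_eq_div[of "2^(L-n)" "x * 2^L"] by simp
  moreover have "0 \<le> \<lfloor>x * 2^L\<rfloor>" using assms by simp
  ultimately show ?thesis unfolding dyadic_index_def by (simp add: nat_div_distrib nat_power_eq)
qed

lemma indicator_dyadic_int:
  "0 \<le> x \<Longrightarrow> indicator (dyadic_int n J) x = (if dyadic_index n x = J then 1 else 0)"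
  unfolding mem_dyadic_int_iff dyadic_index_def indicator_def by auto

lemma dyadic_measD:
  "dyadic_meas n f \<Longrightarrow> 0 \<le> x \<Longrightarrow> x < 1 \<Longrightarrow> 0 \<le> y \<Longrightarrow> y < 1 \<Longrightarrow>
     dyadic_index n x = dyadic_index n y \<Longrightarrow> f x = f y"
  unfolding dyadic_meas_iff by blast

lemma dyadic_meas_mono:
  assumes "n \<le> n'" "dyadic_meas n f"
  shows "dyadic_meas n' f"
  unfolding dyadic_meas_iff
proof (intro allI impI)
  fix x y :: real assume x: "0 \<le> x" "x < 1" and y: "0 \<le> y" "y < 1" and e: "dyadic_index n' x = dyadic_index n' y"
  have "dyadic_index n x = dyadic_index n y" using dyadic_index_coarser[OF x(1) assms(1)] dyadic_index_coarser[OF y(1) assms(1)] e by simp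
  thus "f x = f y" using assms(2) x y unfolding dyadic_meas_iff by blast
qed

lemma dyadic_meas_mult_indicator:
  assumes "n \<le> n'" "dyadic_meas n' v"
  shows "dyadic_meas n' (\<lambda>x. v x * indicator (dyadic_int n J) x)"
  unfolding dyadic_meas_iff
proof (intro allI impI)
  fix x y :: real assume x: "0 \<le> x" "x < 1" and y: "0 \<le> y" "y < 1" and e: "dyadic_index n' x = dyadic_index n' y"
  have "dyadic_index n x = dyadic_index n y" using dyadic_index_coarser[OF x(1) assms(1)] dyadic_index_coarser[OF y(1) assms(1)] e by simp
  moreover have "v x = v y" using assms(2) x y e unfolding dyadic_meas_iff by blast
  ultimately show "v x * indicator (dyadic_int n J) x = v y * indicator (dyadic_int n J) y"
    by (simp only: indicator_dyadic_int[OF x(1)] indicator_dyadic_int[OF y(1)])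
qed

lemma dyadic_meas_mult_indicator_compl: "dyadic_meas n (\<lambda>x. v x * indicator (- {0..<1}) x)"
  unfolding dyadic_meas_iff by simp

lemma dyadic_meas_sum:
  assumes "\<And>i. i \<in> A \<Longrightarrow> dyadic_meas n (f i)"
  shows "dyadic_meas n (\<lambda>x. \<Sum>i\<in>A. f i x)"
  unfolding dyadic_meas_iff
proof (intro allI impI)
  fix x y :: real assume h: "0 \<le> x" "x < 1" "0 \<le> y" "y < 1" "dyadic_index n x = dyadic_index n y"
  have "f i x = f i y" if "i \<in> A" for i using dyadic_measD[OF assms[OF that] h] .
  thus "(\<Sum>i\<in>A. f i x) = (\<Sum>i\<in>A. f i y)" by (rule sum.cong[OF refl])
qed

lemma dyadic_meas_zero: "dyadic_meas n (\<lambda>x. 0)"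
  unfolding dyadic_meas_iff by simp

definition dyadic_point :: "nat \<Rightarrow> nat \<Rightarrow> real" where
  "dyadic_point L j = real (j mod 2^L) / 2^L"

lemma dyadic_point_range: "0 \<le> dyadic_point L j" "dyadic_point L j < 1"
proof -
  show "0 \<le> dyadic_point L j" unfolding dyadic_point_def by simp
  have "j mod 2^L < 2^L" by simp
  hence "real (j mod 2^L) < 2^L" by (metis of_nat_less_numeral_power_cancel_iff)
  thus "dyadic_point L j < 1" unfolding dyadic_point_def by simp
qed

lemma dyadic_index_dyadic_point: "dyadic_index L (dyadic_point L j) = j mod 2^L"
  unfolding dyadic_index_def dyadic_point_def by simp

lemma dyadic_index_dyadic_point_index:
  "0 \<le> x \<Longrightarrow> x < 1 \<Longrightarrow> dyadic_index L (dyadic_point L (dyadic_index L x)) = dyadic_index L x"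
  using dyadic_index_less[of x L] by (simp add: dyadic_index_dyadic_point)

lemma nn_integral_unitI_step:
  assumes h: "\<And>x. 0 \<le> x \<Longrightarrow> x < 1 \<Longrightarrow> h x = G (dyadic_index L x)" and G0: "\<And>j. 0 \<le> G j"
  shows "(\<integral>\<^sup>+x. ennreal (h x) \<partial>unitI) = ennreal ((\<Sum>j<2^L. G j) / 2^L)"
proof -
  have sets: "{0..1::real} \<inter> space lborel \<in> sets lborel" by simp
  have dsets: "dyadic_int L j \<in> sets lborel" for j unfolding dyadic_int_def by simp
  have "(\<integral>\<^sup>+x. ennreal (h x) \<partial>unitI) = (\<integral>\<^sup>+x. ennreal (h x) * indicator {0..1} x \<partial>lborel)"
    unfolding unitI_def by (rule nn_integral_restrict_space[OF sets])
  also have "\<dots> = (\<integral>\<^sup>+x. (\<Sum>j<2^L. ennreal (G j) * indicator (dyadic_int L j) x) \<partial>lborel)"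
  proof (rule nn_integral_cong_AE)
    show "AE x in lborel. ennreal (h x) * indicator {0..1} x = (\<Sum>j<2^L. ennreal (G j) * indicator (dyadic_int L j) x)"
      using AE_lborel_singleton[of "1::real"]
    proof eventually_elim
      fix x :: real assume x1: "x \<noteq> 1"
      show "ennreal (h x) * indicator {0..1} x = (\<Sum>j<2^L. ennreal (G j) * indicator (dyadic_int L j) x)"
      proof (cases "0 \<le> x \<and> x < 1")
        case True
        have "(\<Sum>j<2^L. ennreal (G j) * indicator (dyadic_int L j) x) = (\<Sum>j<2^L. if dyadic_index L x = j then ennreal (G j) else 0)"
          using True by (intro sum.cong refl) (simp add: indicator_dyadic_int)
        also have "\<dots> = ennreal (G (dyadic_index L x))" using dyadic_index_less[of x L] True by simp
        finally show ?thesis using True h by simp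
      next
        case False
        hence "x \<notin> {0..1}" using x1 by auto
        moreover have "x \<notin> dyadic_int L j" if "j < 2^L" for j using dyadic_int_subset[OF that] False by auto
        ultimately show ?thesis by simp
      qed
    qed
  qed
  also have "\<dots> = (\<Sum>j<2^L. (\<integral>\<^sup>+x. ennreal (G j) * indicator (dyadic_int L j) x \<partial>lborel))"
    by (rule nn_integral_sum) (use dsets in auto)
  also have "\<dots> = (\<Sum>j<2^L. ennreal (G j) * emeasure lborel (dyadic_int L j))"
    by (intro sum.cong refl nn_integral_cmult_indicator dsets)
  also have "\<dots> = (\<Sum>j<2^L. ennreal (G j / 2^L))"
  proof (intro sum.cong refl)
    fix j
    have "emeasure lborel (dyadic_int L j) = ennreal ((real j + 1) / 2^L - real j / 2^L)"
      unfolding dyadic_int_def by (intro emeasure_lborel_Ico) (simp add: divide_right_mono)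
    also have "\<dots> = ennreal (1 / 2^L)" by (simp add: diff_divide_distrib[symmetric])
    finally show "ennreal (G j) * emeasure lborel (dyadic_int L j) = ennreal (G j / 2^L)"
      using G0[of j] by (simp add: ennreal_mult''[symmetric] divide_inverse)
  qed
  also have "\<dots> = ennreal ((\<Sum>j<2^L. G j) / 2^L)"
    using G0 by (simp add: sum_divide_distrib)
  finally show ?thesis .
qed

lemma L1n_mult_indicator_compl: "L1n (\<lambda>x. g x * indicator (- {0..<1}) x) = 0"
proof -
  have sets: "{0..1::real} \<inter> space lborel \<in> sets lborel" by simp
  have "AE x in unitI. ennreal \<bar>g x * indicator (- {0..<1}) x\<bar> = 0"
    unfolding unitI_def AE_restrict_space_iff[OF sets]
    using AE_lborel_singleton[of "1::real"] by eventually_elim auto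
  hence "L1n (\<lambda>x. g x * indicator (- {0..<1}) x) = (\<integral>\<^sup>+x. 0 \<partial>unitI)"
    unfolding L1n_def by (rule nn_integral_cong_AE)
  thus ?thesis by simp
qed

section \<open>Square roots and quadratic integral estimates\<close>

lemma esqrt_ennreal: "0 \<le> r \<Longrightarrow> esqrt (ennreal r) = ennreal (sqrt r)"
  unfolding esqrt_def by simp

lemma esqrt_le_iff: "esqrt x \<le> y \<longleftrightarrow> x \<le> y ^ 2"
proof (cases x)
  case (real a)
  note ha = real
  show ?thesis
  proof (cases y)
    case (real b)
    have "esqrt x \<le> y \<longleftrightarrow> sqrt a \<le> b" using real ha by (simp add: esqrt_ennreal)
    also have "\<dots> \<longleftrightarrow> a \<le> b ^ 2" using real \<open>0 \<le> a\<close> by (simp add: real_sqrt_le_iff' sqrt_le_D real_le_rsqrt)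
    also have "\<dots> \<longleftrightarrow> x \<le> y ^ 2" using real \<open>x = ennreal a\<close> \<open>0 \<le> a\<close> by (simp add: ennreal_power)
    finally show ?thesis .
  next
    case top thus ?thesis by simp
  qed
next
  case top
  have "y ^ 2 = top \<longleftrightarrow> y = top" by (simp add: power_eq_top_ennreal_iff)
  thus ?thesis using top by (auto simp: esqrt_def top_unique)
qed

lemma power2_esqrt: "(esqrt x) ^ 2 = x"
proof (cases x)
  case (real a) thus ?thesis by (simp add: esqrt_ennreal ennreal_power)
next
  case top thus ?thesis by (simp add: esqrt_def)
qed

lemma esqrt_power2: "esqrt (y ^ 2) = y"
proof (cases y)
  case (real b) thus ?thesis by (simp add: esqrt_ennreal ennreal_power)
next
  case top thus ?thesis by (simp add: esqrt_def)
qed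

lemma esqrt_mono: "x \<le> y \<Longrightarrow> esqrt x \<le> esqrt y"
  by (simp add: esqrt_le_iff power2_esqrt)

lemma esqrt_SUP: "esqrt (SUP i. a i) = (SUP i. esqrt (a i))"
proof (rule antisym)
  show "esqrt (SUP i. a i) \<le> (SUP i. esqrt (a i))"
    unfolding esqrt_le_iff
  proof (rule SUP_least)
    fix i
    have "esqrt (a i) \<le> (SUP i. esqrt (a i))" by (rule SUP_upper) simp
    thus "a i \<le> (SUP i. esqrt (a i)) ^ 2" by (simp add: esqrt_le_iff)
  qed
  show "(SUP i. esqrt (a i)) \<le> esqrt (SUP i. a i)"
    by (intro SUP_least esqrt_mono SUP_upper) simp
qed

lemma le_esqrt: "y ^ 2 \<le> x \<Longrightarrow> y \<le> esqrt x"
  using esqrt_mono[of "y^2" x] by (simp add: esqrt_power2)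

lemma prob_unitI: "prob_space unitI"
  unfolding unitI_def by (intro prob_space_restrict_space) auto

lemma nn_integral_PiM_component:
  assumes g: "g \<in> borel_measurable unitI"
  shows "(\<integral>\<^sup>+\<omega>. g (\<omega> k) \<partial>PiM UNIV (\<lambda>_. unitI)) = (\<integral>\<^sup>+x. g x \<partial>unitI)"
proof -
  have d: "distr (PiM UNIV (\<lambda>_. unitI)) unitI (\<lambda>\<omega>. \<omega> k) = unitI"
    by (rule distr_PiM_component) (auto simp: prob_unitI)
  have "(\<integral>\<^sup>+x. g x \<partial>unitI) = (\<integral>\<^sup>+x. g x \<partial>distr (PiM UNIV (\<lambda>_. unitI)) unitI (\<lambda>\<omega>. \<omega> k))"
    using d by simp
  also have "\<dots> = (\<integral>\<^sup>+\<omega>. g (\<omega> k) \<partial>PiM UNIV (\<lambda>_. unitI))"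
    by (rule nn_integral_distr) (use g d in auto)
  finally show ?thesis by simp
qed

lemma nn_integral_sqrt_le_esqrt:
  assumes P: "prob_space M" and h: "h \<in> borel_measurable M" and h0: "\<And>x. 0 \<le> h x"
  shows "(\<integral>\<^sup>+x. ennreal (sqrt (h x)) \<partial>M) \<le> esqrt (\<integral>\<^sup>+x. ennreal (h x) \<partial>M)"
proof -
  have m: "(\<lambda>x. ennreal (sqrt (h x))) \<in> borel_measurable M" using h by measurable
  have "(\<integral>\<^sup>+x. ennreal (sqrt (h x)) * 1 \<partial>M)^2 \<le> (\<integral>\<^sup>+x. (ennreal (sqrt (h x)))^2 \<partial>M) * (\<integral>\<^sup>+x. 1 ^ 2 \<partial>M)"
    by (rule Cauchy_Schwarz_nn_integral) (use m in auto)
  also have "(\<integral>\<^sup>+x. 1 ^ 2 \<partial>M) = 1" using P by (simp add: prob_space.emeasure_space_1)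
  also have "(\<integral>\<^sup>+x. (ennreal (sqrt (h x)))^2 \<partial>M) = (\<integral>\<^sup>+x. ennreal (h x) \<partial>M)"
    using h0 by (intro nn_integral_cong) (simp add: ennreal_power)
  finally show ?thesis by (intro le_esqrt) simp
qed

lemma sqrt_sum_sq_le_sum_add_sqrt_sum_sq:
  fixes X U V :: "'i \<Rightarrow> real"
  assumes "\<And>k. k \<in> A \<Longrightarrow> \<bar>X k\<bar> \<le> \<bar>U k\<bar> + \<bar>V k\<bar>"
  shows "sqrt (\<Sum>k\<in>A. (X k)\<^sup>2) \<le> (\<Sum>k\<in>A. \<bar>U k\<bar>) + sqrt (\<Sum>k\<in>A. (V k)\<^sup>2)"
proof -
  have "sqrt (\<Sum>k\<in>A. (X k)\<^sup>2) = L2_set (\<lambda>k. \<bar>X k\<bar>) A" by (simp add: L2_set_def)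
  also have "\<dots> \<le> L2_set (\<lambda>k. \<bar>U k\<bar> + \<bar>V k\<bar>) A" by (rule L2_set_mono) (use assms in auto)
  also have "\<dots> \<le> L2_set (\<lambda>k. \<bar>U k\<bar>) A + L2_set (\<lambda>k. \<bar>V k\<bar>) A" by (rule L2_set_triangle_ineq)
  also have "L2_set (\<lambda>k. \<bar>U k\<bar>) A \<le> (\<Sum>k\<in>A. \<bar>U k\<bar>)" by (rule L2_set_le_sum) simp
  finally show ?thesis by (simp add: L2_set_def)
qed

lemma nn_integral_sqrt_sum_sq_le:
  assumes M: "prob_space M" and I: "finite I"
    and u: "\<And>k. k \<in> I \<Longrightarrow> u k \<in> borel_measurable M"
    and v: "\<And>k. k \<in> I \<Longrightarrow> v k \<in> borel_measurable M"
    and g: "AE \<omega> in M. \<forall>k\<in>I. \<bar>g k \<omega>\<bar> \<le> \<bar>u k \<omega>\<bar> + \<bar>v k \<omega>\<bar>"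
  shows "(\<integral>\<^sup>+\<omega>. ennreal (sqrt (\<Sum>k\<in>I. (g k \<omega>)\<^sup>2)) \<partial>M)
           \<le> (\<Sum>k\<in>I. \<integral>\<^sup>+\<omega>. ennreal \<bar>u k \<omega>\<bar> \<partial>M) + esqrt (\<Sum>k\<in>I. \<integral>\<^sup>+\<omega>. ennreal ((v k \<omega>)\<^sup>2) \<partial>M)"
proof -
  have mu: "(\<lambda>\<omega>. ennreal \<bar>u k \<omega>\<bar>) \<in> borel_measurable M" if "k \<in> I" for k
    using u[OF that] by measurable
  have mv: "(\<lambda>\<omega>. ennreal ((v k \<omega>)\<^sup>2)) \<in> borel_measurable M" if "k \<in> I" for k
    using v[OF that] by measurable
  have sum_v_sq: "(\<lambda>\<omega>. \<Sum>k\<in>I. (v k \<omega>)\<^sup>2) \<in> borel_measurable M"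
    using v by (auto intro!: borel_measurable_sum borel_measurable_power)
  hence sum_v: "(\<lambda>\<omega>. ennreal (sqrt (\<Sum>k\<in>I. (v k \<omega>)\<^sup>2))) \<in> borel_measurable M" by measurable
  from g have "AE \<omega> in M. ennreal (sqrt (\<Sum>k\<in>I. (g k \<omega>)\<^sup>2))
      \<le> (\<Sum>k\<in>I. ennreal \<bar>u k \<omega>\<bar>) + ennreal (sqrt (\<Sum>k\<in>I. (v k \<omega>)\<^sup>2))"
  proof eventually_elim
    case (elim \<omega>)
    hence "sqrt (\<Sum>k\<in>I. (g k \<omega>)\<^sup>2) \<le> (\<Sum>k\<in>I. \<bar>u k \<omega>\<bar>) + sqrt (\<Sum>k\<in>I. (v k \<omega>)\<^sup>2)"
      by (intro sqrt_sum_sq_le_sum_add_sqrt_sum_sq) auto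
    hence "ennreal (sqrt (\<Sum>k\<in>I. (g k \<omega>)\<^sup>2))
        \<le> ennreal ((\<Sum>k\<in>I. \<bar>u k \<omega>\<bar>) + sqrt (\<Sum>k\<in>I. (v k \<omega>)\<^sup>2))"
      by (rule ennreal_leI)
    thus ?case by (simp add: sum_nonneg)
  qed
  hence "(\<integral>\<^sup>+\<omega>. ennreal (sqrt (\<Sum>k\<in>I. (g k \<omega>)\<^sup>2)) \<partial>M)
      \<le> (\<integral>\<^sup>+\<omega>. (\<Sum>k\<in>I. ennreal \<bar>u k \<omega>\<bar>) + ennreal (sqrt (\<Sum>k\<in>I. (v k \<omega>)\<^sup>2)) \<partial>M)"
    by (rule nn_integral_mono_AE)
  also have "\<dots> = (\<integral>\<^sup>+\<omega>. (\<Sum>k\<in>I. ennreal \<bar>u k \<omega>\<bar>) \<partial>M)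
      + (\<integral>\<^sup>+\<omega>. ennreal (sqrt (\<Sum>k\<in>I. (v k \<omega>)\<^sup>2)) \<partial>M)"
    using mu sum_v by (intro nn_integral_add borel_measurable_sum) auto
  also have "(\<integral>\<^sup>+\<omega>. (\<Sum>k\<in>I. ennreal \<bar>u k \<omega>\<bar>) \<partial>M) = (\<Sum>k\<in>I. \<integral>\<^sup>+\<omega>. ennreal \<bar>u k \<omega>\<bar> \<partial>M)"
    using mu by (rule nn_integral_sum)
  also have "(\<integral>\<^sup>+\<omega>. ennreal (sqrt (\<Sum>k\<in>I. (v k \<omega>)\<^sup>2)) \<partial>M)
      \<le> esqrt (\<integral>\<^sup>+\<omega>. ennreal (\<Sum>k\<in>I. (v k \<omega>)\<^sup>2) \<partial>M)"
    by (rule nn_integral_sqrt_le_esqrt[OF M sum_v_sq]) (auto intro: sum_nonneg)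
  also have "(\<integral>\<^sup>+\<omega>. ennreal (\<Sum>k\<in>I. (v k \<omega>)\<^sup>2) \<partial>M) = (\<integral>\<^sup>+\<omega>. (\<Sum>k\<in>I. ennreal ((v k \<omega>)\<^sup>2)) \<partial>M)"
    by simp
  also have "\<dots> = (\<Sum>k\<in>I. \<integral>\<^sup>+\<omega>. ennreal ((v k \<omega>)\<^sup>2) \<partial>M)"
    using mv by (rule nn_integral_sum)
  finally show ?thesis by (simp add: add_left_mono)
qed

lemma sum_abs_sq_le_weighted:
  fixes y \<beta> :: "'i \<Rightarrow> real"
  assumes \<beta>: "\<And>J. J \<in> A \<Longrightarrow> 0 < \<beta> J"
  shows "(\<Sum>J\<in>A. \<bar>y J\<bar>)\<^sup>2 \<le> (\<Sum>J\<in>A. \<beta> J) * (\<Sum>J\<in>A. (y J)\<^sup>2 / \<beta> J)"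
proof -
  have \<beta>0: "0 \<le> \<beta> J" if "J \<in> A" for J using \<beta>[OF that] by simp
  have "(\<Sum>J\<in>A. \<bar>y J\<bar>) = (\<Sum>J\<in>A. \<bar>sqrt (\<beta> J)\<bar> * \<bar>y J / sqrt (\<beta> J)\<bar>)"
  proof (intro sum.cong refl)
    fix J assume "J \<in> A"
    hence "0 < sqrt (\<beta> J)" using \<beta> by simp
    thus "\<bar>y J\<bar> = \<bar>sqrt (\<beta> J)\<bar> * \<bar>y J / sqrt (\<beta> J)\<bar>" by (simp add: abs_divide)
  qed
  also have "\<dots> \<le> L2_set (\<lambda>J. sqrt (\<beta> J)) A * L2_set (\<lambda>J. y J / sqrt (\<beta> J)) A"
    by (rule L2_set_mult_ineq)
  also have "\<dots> = sqrt ((\<Sum>J\<in>A. \<beta> J) * (\<Sum>J\<in>A. (y J)\<^sup>2 / \<beta> J))"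
    unfolding L2_set_def real_sqrt_mult using \<beta>0
    by (intro arg_cong2[where f="(*)"] arg_cong[where f=sqrt] sum.cong) (auto simp: power_divide)
  finally have "(\<Sum>J\<in>A. \<bar>y J\<bar>)\<^sup>2 \<le> (sqrt ((\<Sum>J\<in>A. \<beta> J) * (\<Sum>J\<in>A. (y J)\<^sup>2 / \<beta> J)))\<^sup>2"
    by (intro power_mono) (auto intro: sum_nonneg)
  also have "\<dots> = (\<Sum>J\<in>A. \<beta> J) * (\<Sum>J\<in>A. (y J)\<^sup>2 / \<beta> J)"
    using \<beta>0 by (simp add: sum_nonneg)
  finally show ?thesis .
qed

lemma nn_integral_sq_le_sq_sum_pos:
  fixes h :: "'i \<Rightarrow> 'a \<Rightarrow> real" and \<beta> :: "'i \<Rightarrow> real"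
  assumes A: "finite A" and h: "\<And>J. J \<in> A \<Longrightarrow> h J \<in> borel_measurable M"
    and \<beta>: "\<And>J. J \<in> A \<Longrightarrow> 0 < \<beta> J"
    and h\<beta>: "\<And>J. J \<in> A \<Longrightarrow> (\<integral>\<^sup>+x. ennreal ((h J x)\<^sup>2) \<partial>M) \<le> ennreal ((\<beta> J)\<^sup>2)"
    and g: "AE x in M. \<bar>g x\<bar> \<le> (\<Sum>J\<in>A. \<bar>h J x\<bar>)"
  shows "(\<integral>\<^sup>+x. ennreal ((g x)\<^sup>2) \<partial>M) \<le> ennreal ((\<Sum>J\<in>A. \<beta> J)\<^sup>2)"
proof -
  define B where "B = (\<Sum>J\<in>A. \<beta> J)"
  have B0: "0 \<le> B" unfolding B_def using \<beta> by (intro sum_nonneg) (simp add: less_imp_le)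
  define H where "H J x = ennreal (1 / \<beta> J) * ennreal ((h J x)\<^sup>2)" for J x
  have mh: "(\<lambda>x. ennreal ((h J x)\<^sup>2)) \<in> borel_measurable M" if "J \<in> A" for J
    using h[OF that] by measurable
  from g have "AE x in M. ennreal ((g x)\<^sup>2) \<le> ennreal B * (\<Sum>J\<in>A. H J x)"
  proof eventually_elim
    case (elim x)
    hence "\<bar>g x\<bar>\<^sup>2 \<le> (\<Sum>J\<in>A. \<bar>h J x\<bar>)\<^sup>2" by (rule power_mono) simp
    also have "\<dots> \<le> B * (\<Sum>J\<in>A. (h J x)\<^sup>2 / \<beta> J)"
      unfolding B_def using \<beta> by (rule sum_abs_sq_le_weighted)
    finally have "ennreal ((g x)\<^sup>2) \<le> ennreal B * ennreal (\<Sum>J\<in>A. (h J x)\<^sup>2 / \<beta> J)"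
      by (subst ennreal_mult'[OF B0, symmetric]) (rule ennreal_leI, simp)
    also have "ennreal (\<Sum>J\<in>A. (h J x)\<^sup>2 / \<beta> J) = (\<Sum>J\<in>A. H J x)"
    proof -
      have "H J x = ennreal ((h J x)\<^sup>2 / \<beta> J)" if "J \<in> A" for J
        unfolding H_def using \<beta>[OF that] by (subst ennreal_mult'[symmetric]) auto
      thus ?thesis using \<beta> by (simp add: sum_nonneg less_imp_le)
    qed
    finally show ?case .
  qed
  hence "(\<integral>\<^sup>+x. ennreal ((g x)\<^sup>2) \<partial>M) \<le> (\<integral>\<^sup>+x. ennreal B * (\<Sum>J\<in>A. H J x) \<partial>M)"
    by (rule nn_integral_mono_AE)
  also have "\<dots> = ennreal B * (\<Sum>J\<in>A. ennreal (1 / \<beta> J) * (\<integral>\<^sup>+x. ennreal ((h J x)\<^sup>2) \<partial>M))"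
    using mh unfolding H_def by (simp add: nn_integral_cmult nn_integral_sum borel_measurable_sum)
  also have "\<dots> \<le> ennreal B * (\<Sum>J\<in>A. ennreal (1 / \<beta> J) * ennreal ((\<beta> J)\<^sup>2))"
    using h\<beta> by (intro mult_left_mono sum_mono) auto
  also have "(\<Sum>J\<in>A. ennreal (1 / \<beta> J) * ennreal ((\<beta> J)\<^sup>2)) = ennreal B"
  proof -
    have "ennreal (1 / \<beta> J) * ennreal ((\<beta> J)\<^sup>2) = ennreal (\<beta> J)" if "J \<in> A" for J
      using \<beta>[OF that] by (subst ennreal_mult'[symmetric]) (auto simp: power2_eq_square)
    thus ?thesis unfolding B_def using \<beta> by (simp add: less_imp_le sum_nonneg)
  qed
  finally show ?thesis
    using B0 unfolding B_def by (simp add: ennreal_mult'[symmetric] power2_eq_square)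
qed

text \<open>Minkowski's inequality in \<open>L\<^sup>2\<close>; terms with \<open>\<beta> J = 0\<close> vanish almost everywhere.\<close>
lemma nn_integral_sq_le_sq_sum:
  fixes h :: "'i \<Rightarrow> 'a \<Rightarrow> real" and \<beta> :: "'i \<Rightarrow> real"
  assumes A: "finite A" and h: "\<And>J. J \<in> A \<Longrightarrow> h J \<in> borel_measurable M"
    and \<beta>: "\<And>J. J \<in> A \<Longrightarrow> 0 \<le> \<beta> J"
    and h\<beta>: "\<And>J. J \<in> A \<Longrightarrow> (\<integral>\<^sup>+x. ennreal ((h J x)\<^sup>2) \<partial>M) \<le> ennreal ((\<beta> J)\<^sup>2)"
    and g: "AE x in M. \<bar>g x\<bar> \<le> (\<Sum>J\<in>A. \<bar>h J x\<bar>)"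
  shows "(\<integral>\<^sup>+x. ennreal ((g x)\<^sup>2) \<partial>M) \<le> ennreal ((\<Sum>J\<in>A. \<beta> J)\<^sup>2)"
proof -
  define P where "P = {J \<in> A. 0 < \<beta> J}"
  have P: "finite P" "P \<subseteq> A" using A by (auto simp: P_def)
  have "AE x in M. \<forall>J\<in>A - P. h J x = 0"
  proof (rule AE_finite_allI)
    fix J assume J: "J \<in> A - P"
    hence "(\<integral>\<^sup>+x. ennreal ((h J x)\<^sup>2) \<partial>M) = 0" using h\<beta>[of J] \<beta>[of J] by (simp add: P_def)
    moreover have "(\<lambda>x. ennreal ((h J x)\<^sup>2)) \<in> borel_measurable M"
      using h[of J] J by simp
    ultimately have "AE x in M. ennreal ((h J x)\<^sup>2) = 0" by (simp add: nn_integral_0_iff_AE)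
    thus "AE x in M. h J x = 0" by eventually_elim simp
  qed (use A in simp)
  with g have "AE x in M. \<bar>g x\<bar> \<le> (\<Sum>J\<in>P. \<bar>h J x\<bar>)"
    by eventually_elim (simp add: sum.mono_neutral_right[OF A P(2)])
  hence "(\<integral>\<^sup>+x. ennreal ((g x)\<^sup>2) \<partial>M) \<le> ennreal ((\<Sum>J\<in>P. \<beta> J)\<^sup>2)"
    using P h h\<beta> by (intro nn_integral_sq_le_sq_sum_pos) (auto simp: P_def)
  also have "(\<Sum>J\<in>P. \<beta> J) = (\<Sum>J\<in>A. \<beta> J)"
    using A P(2) by (intro sum.mono_neutral_left) (auto simp: P_def less_le dest: \<beta>)
  finally show ?thesis .
qed

section \<open>Sublinear operators\<close>

lemma sublinear_on_zero_AE:
  assumes "sublinear_on P T" "P (\<lambda>y. 0)"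
  shows "AE x in unitI. T (\<lambda>y. 0) x = 0"
proof -
  have "AE x in unitI. \<bar>T (\<lambda>y. 0 * (\<lambda>y. 0) y) x\<bar> = \<bar>0\<bar> * \<bar>T (\<lambda>y. 0) x\<bar>"
    using assms unfolding sublinear_on_def by blast
  thus ?thesis by simp
qed

lemma sublinear_on_add_AE:
  assumes "sublinear_on P T" "P f" "P g"
  shows "AE x in unitI. \<bar>T (\<lambda>y. f y + g y) x\<bar> \<le> \<bar>T f x\<bar> + \<bar>T g x\<bar>"
  using assms unfolding sublinear_on_def by blast

lemma sublinear_on_sum_AE:
  assumes S: "sublinear_on (dyadic_meas n) T" and g: "\<And>J. J \<in> A \<Longrightarrow> dyadic_meas n (g J)" and A: "finite A"
  shows "AE x in unitI. \<bar>T (\<lambda>y. \<Sum>J\<in>A. g J y) x\<bar> \<le> (\<Sum>J\<in>A. \<bar>T (g J) x\<bar>)"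
  using A g
proof (induction A rule: finite_induct)
  case empty
  show ?case using sublinear_on_zero_AE[OF S dyadic_meas_zero] by (auto elim: AE_mp)
next
  case (insert a F)
  have e: "(\<lambda>y. \<Sum>J\<in>insert a F. g J y) = (\<lambda>y. g a y + (\<Sum>J\<in>F. g J y))"
    using insert by simp
  have dF: "dyadic_meas n (\<lambda>y. \<Sum>J\<in>F. g J y)" using insert by (intro dyadic_meas_sum) auto
  have A1: "AE x in unitI. \<bar>T (\<lambda>y. g a y + (\<Sum>J\<in>F. g J y)) x\<bar> \<le> \<bar>T (g a) x\<bar> + \<bar>T (\<lambda>y. \<Sum>J\<in>F. g J y) x\<bar>"
    using insert.prems by (intro sublinear_on_add_AE[OF S] dF) auto
  have A2: "AE x in unitI. \<bar>T (\<lambda>y. \<Sum>J\<in>F. g J y) x\<bar> \<le> (\<Sum>J\<in>F. \<bar>T (g J) x\<bar>)"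
    using insert.IH insert.prems by auto
  have "AE x in unitI. \<bar>T (\<lambda>y. g a y + (\<Sum>J\<in>F. g J y)) x\<bar> \<le> \<bar>T (g a) x\<bar> + (\<Sum>J\<in>F. \<bar>T (g J) x\<bar>)"
    using A1 A2 by eventually_elim simp
  thus ?case unfolding e using insert.hyps by simp
qed

section \<open>The estimate for a family of sublinear operators\<close>

locale dyadic_sublinear_family =
  fixes mk :: "nat \<Rightarrow> nat" and s :: nat and T :: "nat \<Rightarrow> (real \<Rightarrow> real) \<Rightarrow> real \<Rightarrow> real"
    and C1 C2 :: real and f :: "nat \<Rightarrow> real \<Rightarrow> real"
  assumes mk_less: "\<And>k. k \<ge> 1 \<Longrightarrow> mk k < mk (Suc k)"
    and C1_nonneg: "0 \<le> C1" and C2_nonneg: "0 \<le> C2"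
    and T_sublinear: "\<And>k. k \<ge> 1 \<Longrightarrow> sublinear_on (dyadic_meas (mk k)) (T k)"
    and T_measurable: "\<And>k g. k \<ge> 1 \<Longrightarrow> dyadic_meas (mk k) g \<Longrightarrow> T k g \<in> borel_measurable unitI"
    and T_L1: "\<And>k g. k \<ge> 1 \<Longrightarrow> dyadic_meas (mk k) g \<Longrightarrow> L1n (T k g) \<le> ennreal C1 * L1n g"
    and T_L2_local: "\<And>k g m i j. k \<ge> 1 \<Longrightarrow> dyadic_meas (mk k) g \<Longrightarrow> i < 2 ^ m \<Longrightarrow>
          (\<forall>x\<in>{0..1}. g x \<noteq> 0 \<longrightarrow> x \<in> dyadic_int m i) \<Longrightarrow> 1 \<le> j \<Longrightarrow> m \<le> mk j \<Longrightarrow> j + s \<le> k \<Longrightarrow>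
          L2n (T k g) \<le> ennreal (C2 * sqrt (1 / 2 ^ m)) * L2n g"
    and f_dyadic_meas: "\<And>k. k \<ge> 1 \<Longrightarrow> dyadic_meas (mk k) (f k)"
begin

text \<open>The data are indexed from 1; from here on they are reindexed from 0.\<close>
definition M :: "nat \<Rightarrow> nat" where "M i = mk (Suc i)"
definition F :: "nat \<Rightarrow> real \<Rightarrow> real" where "F i = f (Suc i)"
definition TT :: "nat \<Rightarrow> (real \<Rightarrow> real) \<Rightarrow> real \<Rightarrow> real" where "TT i = T (Suc i)"

definition good_part :: "nat \<Rightarrow> real \<Rightarrow> real" where
  "good_part i x = (if good_index s (\<lambda>l. F l x) i then F i x else 0)"

definition bad_part :: "nat \<Rightarrow> real \<Rightarrow> real" where
  "bad_part i x = (if good_index s (\<lambda>l. F l x) i then 0 else F i x)"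

lemma M_mono: "l \<le> i \<Longrightarrow> M l \<le> M i"
  by (rule lift_Suc_mono_le) (use mk_less in \<open>auto simp: M_def less_imp_le\<close>)

lemma F_dyadic_meas: "l \<le> i \<Longrightarrow> dyadic_meas (M i) (F l)"
  unfolding F_def by (rule dyadic_meas_mono[OF M_mono]) (auto simp: M_def f_dyadic_meas)

lemma TT_sublinear: "sublinear_on (dyadic_meas (M i)) (TT i)"
  unfolding TT_def M_def by (rule T_sublinear) simp

lemma TT_measurable: "dyadic_meas (M i) g \<Longrightarrow> TT i g \<in> borel_measurable unitI"
  unfolding TT_def M_def by (rule T_measurable) auto

lemma parts_dyadic_meas: "dyadic_meas (M i) (good_part i)" "dyadic_meas (M i) (bad_part i)"
proof -
  have parts_eq: "good_part i x = good_part i y \<and> bad_part i x = bad_part i y"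
    if xy: "0 \<le> x" "x < 1" "0 \<le> y" "y < 1" "dyadic_index (M i) x = dyadic_index (M i) y" for x y
  proof -
    have F_eq: "F l x = F l y" if "l \<le> i" for l using dyadic_measD[OF F_dyadic_meas[OF that] xy] .
    hence "good_index s (\<lambda>l. F l x) i = good_index s (\<lambda>l. F l y) i" by (rule good_index_cong)
    thus ?thesis using F_eq[of i] by (simp add: good_part_def bad_part_def)
  qed
  show "dyadic_meas (M i) (good_part i)" "dyadic_meas (M i) (bad_part i)"
    unfolding dyadic_meas_iff using parts_eq by meson+
qed

lemma TT_le_parts_AE: "AE x in unitI. \<bar>TT i (F i) x\<bar> \<le> \<bar>TT i (bad_part i) x\<bar> + \<bar>TT i (good_part i) x\<bar>"
proof -
  have "F i = (\<lambda>x. bad_part i x + good_part i x)"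
    unfolding good_part_def bad_part_def by auto
  with sublinear_on_add_AE[OF TT_sublinear parts_dyadic_meas(2,1)] show ?thesis by (simp only:)
qed

lemma TT_bad_part_L1: "L1n (TT i (bad_part i)) \<le> ennreal C1 * L1n (bad_part i)"
  unfolding TT_def using T_L1[of "Suc i"] parts_dyadic_meas(2)[of i] by (simp add: M_def)

lemma good_part_below_gap:
  assumes "i < s"
  shows "good_part i = (\<lambda>x. 0)"
proof
  fix x show "good_part i x = 0"
    using good_index_below_gap[OF assms, of "\<lambda>l. F l x"] by (simp add: good_part_def)
qed

lemma TT_AE_eq_0:
  assumes "dyadic_meas (M i) g" "L1n g = 0"
  shows "AE x in unitI. TT i g x = 0"
proof -
  have "(\<integral>\<^sup>+x. ennreal \<bar>TT i g x\<bar> \<partial>unitI) = 0"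
    using T_L1[of "Suc i" g] assms unfolding TT_def M_def L1n_def by simp
  moreover have "(\<lambda>x. ennreal \<bar>TT i g x\<bar>) \<in> borel_measurable unitI"
    using TT_measurable[OF assms(1)] by measurable
  ultimately have "AE x in unitI. ennreal \<bar>TT i g x\<bar> = 0" by (simp add: nn_integral_0_iff_AE)
  thus ?thesis by eventually_elim simp
qed

lemma TT_AE_le_sum_pieces:
  assumes n: "n \<le> M i" and g: "dyadic_meas (M i) g"
  shows "AE x in unitI. \<bar>TT i g x\<bar> \<le> (\<Sum>J<2^n. \<bar>TT i (\<lambda>y. g y * indicator (dyadic_int n J) y) x\<bar>)"
proof -
  define p where "p J = (\<lambda>y. g y * indicator (dyadic_int n J) y)" for J
  define q where "q = (\<lambda>y. g y * indicator (- {0..<1}) y)"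
  have p: "dyadic_meas (M i) (p J)" for J unfolding p_def by (rule dyadic_meas_mult_indicator[OF n g])
  have q: "dyadic_meas (M i) q" unfolding q_def by (rule dyadic_meas_mult_indicator_compl)
  have g_eq: "g = (\<lambda>y. (\<Sum>J<2^n. p J y) + q y)"
  proof
    fix y show "g y = (\<Sum>J<2^n. p J y) + q y"
    proof (cases "0 \<le> y \<and> y < 1")
      case True
      hence "(\<Sum>J<2^n. p J y) = (\<Sum>J<2^n. if dyadic_index n y = J then g y else 0)"
        by (intro sum.cong) (simp_all add: p_def indicator_dyadic_int)
      also have "\<dots> = g y" using dyadic_index_less[of y n] True by simp
      finally have "(\<Sum>J<2^n. p J y) = g y" .
      thus ?thesis using True by (simp add: q_def)
    next
      case False
      hence "p J y = 0" if "J < 2^n" for J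
        using dyadic_int_subset[OF that] unfolding p_def by (auto simp: indicator_def)
      thus ?thesis using False by (simp add: q_def)
    qed
  qed
  have "AE x in unitI. \<bar>TT i g x\<bar> \<le> \<bar>TT i (\<lambda>y. \<Sum>J<2^n. p J y) x\<bar> + \<bar>TT i q x\<bar>"
    using sublinear_on_add_AE[OF TT_sublinear dyadic_meas_sum[OF p] q] by (simp only: g_eq)
  moreover have "AE x in unitI. \<bar>TT i (\<lambda>y. \<Sum>J<2^n. p J y) x\<bar> \<le> (\<Sum>J<2^n. \<bar>TT i (p J) x\<bar>)"
    by (rule sublinear_on_sum_AE[OF TT_sublinear p]) simp
  moreover have "AE x in unitI. TT i q x = 0"
    by (rule TT_AE_eq_0[OF q]) (simp add: q_def L1n_mult_indicator_compl)
  ultimately show ?thesis unfolding p_def by eventually_elim simp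
qed

lemma TT_good_part_L2:
  fixes X :: "nat \<Rightarrow> real"
  assumes i: "s \<le> i" and X0: "\<And>J. 0 \<le> X J"
    and X: "\<And>J. J < 2^M (i - s) \<Longrightarrow>
       (\<integral>\<^sup>+x. ennreal ((good_part i x * indicator (dyadic_int (M (i - s)) J) x)\<^sup>2) \<partial>unitI) = ennreal (X J)"
  shows "(\<integral>\<^sup>+x. ennreal ((TT i (good_part i) x)\<^sup>2) \<partial>unitI)
           \<le> ennreal ((C2 * (\<Sum>J<2^M (i - s). sqrt (1 / 2^M (i - s)) * sqrt (X J)))\<^sup>2)"
proof -
  define n where "n = M (i - s)"
  define p where "p J = (\<lambda>y. good_part i y * indicator (dyadic_int n J) y)" for J
  define \<beta> where "\<beta> J = C2 * sqrt (1 / 2^n) * sqrt (X J)" for J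
  have n: "n \<le> M i" unfolding n_def by (rule M_mono) simp
  have p: "dyadic_meas (M i) (p J)" for J
    unfolding p_def by (rule dyadic_meas_mult_indicator[OF n parts_dyadic_meas(1)])
  have \<beta>0: "0 \<le> \<beta> J" for J using C2_nonneg X0[of J] by (simp add: \<beta>_def)
  have "(\<integral>\<^sup>+x. ennreal ((TT i (good_part i) x)\<^sup>2) \<partial>unitI) \<le> ennreal ((\<Sum>J<2^n. \<beta> J)\<^sup>2)"
  proof (rule nn_integral_sq_le_sq_sum[where h = "\<lambda>J. TT i (p J)"])
    fix J :: nat assume J: "J \<in> {..<2^n}"
    have "L2n (TT i (p J)) \<le> ennreal (C2 * sqrt (1 / 2^n)) * L2n (p J)"
      unfolding TT_def
    proof (rule T_L2_local[where j = "Suc (i - s)" and i = J])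
      show "dyadic_meas (mk (Suc i)) (p J)" using p[of J] by (simp add: M_def)
      show "\<forall>x\<in>{0..1}. p J x \<noteq> 0 \<longrightarrow> x \<in> dyadic_int n J" by (simp add: p_def indicator_def)
    qed (use J i in \<open>auto simp: n_def M_def\<close>)
    also have "L2n (p J) = ennreal (sqrt (X J))"
      using X[of J] J X0[of J] by (simp add: L2n_def n_def p_def esqrt_ennreal)
    also have "ennreal (C2 * sqrt (1 / 2^n)) * ennreal (sqrt (X J)) = ennreal (\<beta> J)"
      unfolding \<beta>_def by (rule ennreal_mult''[symmetric]) (simp add: X0)
    finally have "L2n (TT i (p J)) \<le> ennreal (\<beta> J)" .
    thus "(\<integral>\<^sup>+x. ennreal ((TT i (p J) x)\<^sup>2) \<partial>unitI) \<le> ennreal ((\<beta> J)\<^sup>2)"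
      unfolding L2n_def esqrt_le_iff using \<beta>0[of J] by (simp add: ennreal_power)
  next
    show "AE x in unitI. \<bar>TT i (good_part i) x\<bar> \<le> (\<Sum>J<2^n. \<bar>TT i (p J) x\<bar>)"
      using TT_AE_le_sum_pieces[OF n parts_dyadic_meas(1)] by (simp add: p_def)
  qed (auto intro: \<beta>0 TT_measurable[OF p])
  thus ?thesis by (simp add: \<beta>_def n_def sum_distrib_left mult.assoc)
qed

text \<open>For \<open>l \<le> N\<close> the function \<open>F l\<close> is constant on the atoms of \<open>\<F>\<^bsub>M N\<^esub>\<close>;
  \<open>F_atom N l j\<close> is its value on the \<open>j\<close>-th one.\<close>
definition F_atom :: "nat \<Rightarrow> nat \<Rightarrow> nat \<Rightarrow> real" where
  "F_atom N l j = F l (dyadic_point (M N) j)"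

definition good_atom :: "nat \<Rightarrow> nat \<Rightarrow> nat \<Rightarrow> real" where
  "good_atom N i j = (if good_index s (\<lambda>l. F_atom N l j) i then F_atom N i j else 0)"

lemma F_eq_F_atom:
  assumes "l \<le> N" "0 \<le> x" "x < 1"
  shows "F l x = F_atom N l (dyadic_index (M N) x)"
  unfolding F_atom_def
  by (rule dyadic_measD[OF F_dyadic_meas[OF assms(1)]])
     (use assms dyadic_point_range dyadic_index_dyadic_point_index in auto)

lemma good_index_F_eq:
  assumes "i \<le> N" "0 \<le> x" "x < 1"
  shows "good_index s (\<lambda>l. F l x) i = good_index s (\<lambda>l. F_atom N l (dyadic_index (M N) x)) i"
  by (rule good_index_cong) (use F_eq_F_atom[of _ N x] assms in auto)

lemma L1n_bad_part_eq:
  assumes "i \<le> N"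
  shows "L1n (bad_part i)
    = ennreal ((\<Sum>j<2^M N. \<bar>if good_index s (\<lambda>l. F_atom N l j) i then 0 else F_atom N i j\<bar>) / 2^M N)"
  unfolding L1n_def bad_part_def
  by (rule nn_integral_unitI_step) (use good_index_F_eq F_eq_F_atom assms in auto)

definition sqfun_avg :: "nat \<Rightarrow> real" where
  "sqfun_avg N = (\<Sum>j<2^M N. sqrt (sqsum (\<lambda>l. F_atom N l j) N)) / 2^M N"

lemma sqfun_avg_nonneg: "0 \<le> sqfun_avg N"
  unfolding sqfun_avg_def by (intro divide_nonneg_pos sum_nonneg) (auto simp: sqsum_nonneg)

lemma nn_integral_sqrt_sqsum_eq:
  "(\<integral>\<^sup>+x. ennreal (sqrt (sqsum (\<lambda>l. F l x) N)) \<partial>unitI) = ennreal (sqfun_avg N)"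
  unfolding sqfun_avg_def
  by (rule nn_integral_unitI_step) (auto intro!: sqsum_cong F_eq_F_atom simp: sqsum_nonneg)

lemma sqfun_avg_le_sqfun_norm: "ennreal (sqfun_avg N) \<le> sqfun_norm f"
proof -
  have "ennreal (sqrt (sqsum (\<lambda>l. F l x) N)) \<le> esqrt (\<Sum>k. ennreal ((f (Suc k) x)\<^sup>2))" for x
  proof -
    have "(\<Sum>k<N. ennreal ((f (Suc k) x)\<^sup>2)) = ennreal (sqsum (\<lambda>l. F l x) N)"
      by (simp add: sqsum_def F_def)
    hence "ennreal (sqrt (sqsum (\<lambda>l. F l x) N)) = esqrt (\<Sum>k<N. ennreal ((f (Suc k) x)\<^sup>2))"
      by (simp add: esqrt_ennreal sqsum_nonneg)
    also have "\<dots> \<le> esqrt (\<Sum>k. ennreal ((f (Suc k) x)\<^sup>2))"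
      unfolding suminf_eq_SUP by (intro esqrt_mono SUP_upper) simp
    finally show ?thesis .
  qed
  thus ?thesis
    unfolding nn_integral_sqrt_sqsum_eq[symmetric] sqfun_norm_def by (intro nn_integral_mono)
qed

lemma block_const_F_atom:
  assumes "i \<le> N"
  shows "block_const (M N) (M i) (F_atom N i)"
  unfolding block_const_def
proof (intro allI impI)
  fix j j' :: nat
  let ?L = "M N" and ?d = "2^(M N - M i)"
  assume h: "j div ?d = j' div ?d"
  have iL: "M i \<le> ?L" using M_mono assms by simp
  have "(2::nat)^?L = ?d * 2^(M i)" using iL by (simp add: power_add[symmetric])
  hence "dyadic_index (M i) (dyadic_point ?L k) = (k div ?d) mod 2^(M i)" for k
    using dyadic_index_coarser[OF dyadic_point_range(1) iL]
    by (simp add: dyadic_index_dyadic_point mod_mult2_eq)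
  hence "dyadic_index (M i) (dyadic_point ?L j) = dyadic_index (M i) (dyadic_point ?L j')"
    using h by simp
  thus "F_atom N i j = F_atom N i j'"
    unfolding F_atom_def using dyadic_measD[OF F_dyadic_meas] dyadic_point_range by blast
qed

lemma nn_integral_sq_good_part_indicator_eq:
  assumes i: "i \<le> N" and n: "n \<le> M N" and J: "J < 2^n"
  shows "(\<integral>\<^sup>+x. ennreal ((good_part i x * indicator (dyadic_int n J) x)\<^sup>2) \<partial>unitI)
       = ennreal ((\<Sum>r<2^(M N - n). (good_atom N i (J * 2^(M N - n) + r))\<^sup>2) / 2^M N)"
proof -
  define L d where "L = M N" and "d = (2::nat)^(L - n)"
  define G where "G j = (if j div d = J then (good_atom N i j)\<^sup>2 else 0)" for j
  have "(\<integral>\<^sup>+x. ennreal ((good_part i x * indicator (dyadic_int n J) x)\<^sup>2) \<partial>unitI)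
      = ennreal ((\<Sum>j<2^L. G j) / 2^L)"
  proof (rule nn_integral_unitI_step)
    fix x :: real assume x: "0 \<le> x" "x < 1"
    have "good_part i x = good_atom N i (dyadic_index L x)"
      unfolding good_part_def good_atom_def L_def using good_index_F_eq F_eq_F_atom i x by simp
    moreover have "indicator (dyadic_int n J) x = (if dyadic_index L x div d = J then 1 else (0::real))"
      using indicator_dyadic_int[OF x(1), of n J] dyadic_index_coarser[OF x(1) n]
      unfolding d_def L_def by simp
    ultimately show "(good_part i x * indicator (dyadic_int n J) x)\<^sup>2 = G (dyadic_index L x)"
      unfolding G_def by simp
  qed (simp add: G_def)
  also have "(\<Sum>j<2^L. G j) = (\<Sum>J'<2^n. if J' = J then (\<Sum>r<d. (good_atom N i (J * d + r))\<^sup>2) else 0)"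
    unfolding sum_pow2_blocks[OF n[folded L_def]] d_def[symmetric]
    by (intro sum.cong refl) (auto simp: G_def d_def)
  also have "\<dots> = (\<Sum>r<d. (good_atom N i (J * d + r))\<^sup>2)" using J by simp
  finally show ?thesis unfolding L_def d_def .
qed

lemma TT_good_part_L2_atoms:
  assumes "i < N"
  shows "(\<integral>\<^sup>+x. ennreal ((TT i (good_part i) x)\<^sup>2) \<partial>unitI)
     \<le> ennreal ((C2 * ((\<Sum>j<2^M N. sqrt (block_avg (M N) (M (i - s)) (\<lambda>j. (good_atom N i j)\<^sup>2) j)) / 2^M N))\<^sup>2)"
proof (cases "s \<le> i")
  case True
  define n where "n = M (i - s)"
  have n: "n \<le> M N" unfolding n_def using assms by (intro M_mono) simp
  have "(\<integral>\<^sup>+x. ennreal ((TT i (good_part i) x)\<^sup>2) \<partial>unitI)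
      \<le> ennreal ((C2 * (\<Sum>J<2^n. sqrt (1 / 2^n) *
           sqrt ((\<Sum>r<2^(M N - n). (good_atom N i (J * 2^(M N - n) + r))\<^sup>2) / 2^M N)))\<^sup>2)"
    unfolding n_def
    by (rule TT_good_part_L2[OF True])
       (use nn_integral_sq_good_part_indicator_eq[OF less_imp_le[OF assms] n[unfolded n_def]] in
        \<open>auto intro!: divide_nonneg_pos sum_nonneg\<close>)
  also have "\<dots> = ennreal ((C2 * ((\<Sum>j<2^M N. sqrt (block_avg (M N) n (\<lambda>j. (good_atom N i j)\<^sup>2) j)) / 2^M N))\<^sup>2)"
    using sum_sqrt_block_avg[OF n, of "\<lambda>j. (good_atom N i j)\<^sup>2"] by simp
  finally show ?thesis by (simp add: n_def)
next
  case False
  hence "good_part i = (\<lambda>x. 0)" by (intro good_part_below_gap) simp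
  moreover have "AE x in unitI. TT i (\<lambda>x. 0) x = 0"
    by (rule sublinear_on_zero_AE[OF TT_sublinear dyadic_meas_zero])
  ultimately have "(\<integral>\<^sup>+x. ennreal ((TT i (good_part i) x)\<^sup>2) \<partial>unitI) = (\<integral>\<^sup>+x. 0 \<partial>unitI)"
    by (intro nn_integral_cong_AE) (auto elim: AE_mp)
  thus ?thesis by simp
qed

lemma sum_L1n_TT_bad_parts_le:
  "(\<Sum>k<N. L1n (TT k (bad_part k)))
     \<le> ennreal (C1 * (2 * sqrt s * (sqfun_avg N)))"
proof -
  define a where "a k = (\<Sum>j<2^M N. \<bar>if good_index s (\<lambda>l. F_atom N l j) k then 0 else F_atom N k j\<bar>) / 2^M N"
    for k
  have a0: "0 \<le> a k" for k unfolding a_def by (intro divide_nonneg_pos sum_nonneg) auto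
  have "(\<Sum>k<N. L1n (TT k (bad_part k))) \<le> (\<Sum>k<N. ennreal C1 * L1n (bad_part k))"
    by (intro sum_mono TT_bad_part_L1)
  also have "\<dots> = (\<Sum>k<N. ennreal (C1 * a k))"
  proof (intro sum.cong refl)
    fix k assume "k \<in> {..<N}"
    hence "L1n (bad_part k) = ennreal (a k)" unfolding a_def by (simp add: L1n_bad_part_eq)
    thus "ennreal C1 * L1n (bad_part k) = ennreal (C1 * a k)" using C1_nonneg by (simp add: ennreal_mult')
  qed
  also have "\<dots> = ennreal (C1 * (\<Sum>k<N. a k))"
    using C1_nonneg a0 by (simp add: sum_distrib_left)
  also have "\<dots> \<le> ennreal (C1 * (2 * sqrt s * (sqfun_avg N)))"
    unfolding a_def sqfun_avg_def using C1_nonneg by (intro ennreal_leI mult_left_mono avg_sum_bad_terms_le)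
  finally show ?thesis .
qed

lemma sum_L2_TT_good_parts_le:
  "(\<Sum>k<N. \<integral>\<^sup>+x. ennreal ((TT k (good_part k) x)\<^sup>2) \<partial>unitI)
     \<le> ennreal ((C2 * ((2 * sqrt 5 + 2) * (sqfun_avg N)))\<^sup>2)"
proof -
  define b where
    "b k = (\<Sum>j<2^M N. sqrt (block_avg (M N) (M (k - s)) (\<lambda>j. (good_atom N k j)\<^sup>2) j)) / 2^M N" for k
  have "sqrt (\<Sum>k<N. (b k)\<^sup>2) \<le> (2 * sqrt 5 + 2) * (sqfun_avg N)"
    unfolding b_def good_atom_def sqfun_avg_def
    by (rule good_terms_block_avg_le) (auto intro: M_mono block_const_F_atom)
  hence le: "(C2 * sqrt (\<Sum>k<N. (b k)\<^sup>2))\<^sup>2 \<le> (C2 * ((2 * sqrt 5 + 2) * sqfun_avg N))\<^sup>2"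
    using C2_nonneg by (intro power_mono mult_left_mono) (auto intro!: mult_nonneg_nonneg sum_nonneg)
  have "(\<Sum>k<N. \<integral>\<^sup>+x. ennreal ((TT k (good_part k) x)\<^sup>2) \<partial>unitI) \<le> (\<Sum>k<N. ennreal ((C2 * b k)\<^sup>2))"
    unfolding b_def by (intro sum_mono TT_good_part_L2_atoms) simp
  also have "\<dots> = ennreal ((C2 * sqrt (\<Sum>k<N. (b k)\<^sup>2))\<^sup>2)"
    by (simp add: power_mult_distrib sum_distrib_left sum_nonneg)
  also have "\<dots> \<le> ennreal ((C2 * ((2 * sqrt 5 + 2) * sqfun_avg N))\<^sup>2)"
    using le by (rule ennreal_leI)
  finally show ?thesis .
qed

lemma partial_ind_norm_le_parts:
  "(\<integral>\<^sup>+\<omega>. ennreal (sqrt (\<Sum>k<N. (TT k (F k) (\<omega> (Suc k)))\<^sup>2)) \<partial>PiM UNIV (\<lambda>_. unitI))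
     \<le> (\<Sum>k<N. L1n (TT k (bad_part k))) + esqrt (\<Sum>k<N. \<integral>\<^sup>+x. ennreal ((TT k (good_part k) x)\<^sup>2) \<partial>unitI)"
proof -
  let ?P = "PiM UNIV (\<lambda>_. unitI)"
  have [measurable]: "TT k (bad_part k) \<in> borel_measurable unitI" "TT k (good_part k) \<in> borel_measurable unitI"
    for k by (intro TT_measurable parts_dyadic_meas)+
  have "(\<integral>\<^sup>+\<omega>. ennreal (sqrt (\<Sum>k<N. (TT k (F k) (\<omega> (Suc k)))\<^sup>2)) \<partial>?P)
      \<le> (\<Sum>k<N. \<integral>\<^sup>+\<omega>. ennreal \<bar>TT k (bad_part k) (\<omega> (Suc k))\<bar> \<partial>?P)
        + esqrt (\<Sum>k<N. \<integral>\<^sup>+\<omega>. ennreal ((TT k (good_part k) (\<omega> (Suc k)))\<^sup>2) \<partial>?P)"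
  proof (rule nn_integral_sqrt_sum_sq_le)
    show "prob_space ?P" by (intro prob_space_PiM prob_unitI)
    show "AE \<omega> in ?P. \<forall>k\<in>{..<N}. \<bar>TT k (F k) (\<omega> (Suc k))\<bar>
        \<le> \<bar>TT k (bad_part k) (\<omega> (Suc k))\<bar> + \<bar>TT k (good_part k) (\<omega> (Suc k))\<bar>"
    proof (rule AE_finite_allI)
      fix k
      show "AE \<omega> in ?P. \<bar>TT k (F k) (\<omega> (Suc k))\<bar>
          \<le> \<bar>TT k (bad_part k) (\<omega> (Suc k))\<bar> + \<bar>TT k (good_part k) (\<omega> (Suc k))\<bar>"
        by (rule AE_PiM_component[where P = "\<lambda>x. \<bar>TT k (F k) x\<bar> \<le> \<bar>TT k (bad_part k) x\<bar> + \<bar>TT k (good_part k) x\<bar>"])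
           (simp_all add: prob_unitI TT_le_parts_AE)
    qed simp
  qed measurable
  also have "\<dots> = (\<Sum>k<N. L1n (TT k (bad_part k)))
        + esqrt (\<Sum>k<N. \<integral>\<^sup>+x. ennreal ((TT k (good_part k) x)\<^sup>2) \<partial>unitI)"
    unfolding L1n_def by (intro arg_cong2[where f = "(+)"] arg_cong[where f = esqrt] sum.cong refl
        nn_integral_PiM_component) measurable
  finally show ?thesis .
qed

lemma partial_ind_norm_le:
  "(\<integral>\<^sup>+\<omega>. ennreal (sqrt (\<Sum>k<N. (TT k (F k) (\<omega> (Suc k)))\<^sup>2)) \<partial>PiM UNIV (\<lambda>_. unitI))
     \<le> ennreal (7 * (C1 * sqrt s + C2)) * sqfun_norm f"
proof -
  define R where "R = sqfun_avg N"
  have R0: "0 \<le> R" unfolding R_def by (rule sqfun_avg_nonneg)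
  have C1R: "0 \<le> C1 * (2 * sqrt s * R)" and C2R: "0 \<le> C2 * ((2 * sqrt 5 + 2) * R)"
    using C1_nonneg C2_nonneg R0 by simp_all
  have "(\<integral>\<^sup>+\<omega>. ennreal (sqrt (\<Sum>k<N. (TT k (F k) (\<omega> (Suc k)))\<^sup>2)) \<partial>PiM UNIV (\<lambda>_. unitI))
      \<le> ennreal (C1 * (2 * sqrt s * R)) + ennreal (C2 * ((2 * sqrt 5 + 2) * R))"
    using partial_ind_norm_le_parts[of N] sum_L1n_TT_bad_parts_le[of N]
      esqrt_mono[OF sum_L2_TT_good_parts_le[of N]] C2R
    unfolding R_def by (simp add: esqrt_ennreal) (meson add_mono order_trans)
  also have "\<dots> \<le> ennreal (7 * (C1 * sqrt s + C2) * R)"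
  proof -
    have "sqrt 5 \<le> 5 / 2" by (rule real_le_lsqrt) (auto simp: power2_eq_square)
    hence "C2 * ((2 * sqrt 5 + 2) * R) \<le> C2 * (7 * R)"
      using C2_nonneg R0 by (intro mult_left_mono mult_right_mono) auto
    moreover have "C1 * (2 * sqrt s * R) \<le> C1 * (7 * sqrt s * R)"
      using C1_nonneg R0 by (intro mult_left_mono mult_right_mono) auto
    ultimately have "C1 * (2 * sqrt s * R) + C2 * ((2 * sqrt 5 + 2) * R) \<le> 7 * (C1 * sqrt s + C2) * R"
      by (simp add: algebra_simps)
    thus ?thesis using C1R C2R by (simp flip: ennreal_plus add: ennreal_leI)
  qed
  also have "\<dots> = ennreal (7 * (C1 * sqrt s + C2)) * ennreal R"
    using R0 by (rule ennreal_mult'')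
  also have "\<dots> \<le> ennreal (7 * (C1 * sqrt s + C2)) * sqfun_norm f"
    unfolding R_def by (intro mult_left_mono sqfun_avg_le_sqfun_norm) simp
  finally show ?thesis .
qed

lemma ind_norm_le: "ind_norm (\<lambda>k. T k (f k)) \<le> ennreal (7 * (C1 * sqrt s + C2)) * sqfun_norm f"
proof -
  let ?P = "PiM UNIV (\<lambda>_. unitI)"
  define G where "G N \<omega> = ennreal (sqrt (\<Sum>k<N. (TT k (F k) (\<omega> (Suc k)))\<^sup>2))" for N \<omega>
  have [measurable]: "TT k (F k) \<in> borel_measurable unitI" for k
    by (intro TT_measurable F_dyadic_meas) simp
  have "esqrt (\<Sum>k. ennreal ((T (Suc k) (f (Suc k)) (\<omega> (Suc k)))\<^sup>2)) = (SUP N. G N \<omega>)" for \<omega>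
    unfolding suminf_eq_SUP esqrt_SUP G_def TT_def F_def by (simp add: esqrt_ennreal sum_nonneg)
  hence "ind_norm (\<lambda>k. T k (f k)) = (\<integral>\<^sup>+\<omega>. (SUP N. G N \<omega>) \<partial>?P)"
    unfolding ind_norm_def by simp
  also have "\<dots> = (SUP N. \<integral>\<^sup>+\<omega>. G N \<omega> \<partial>?P)"
  proof (rule nn_integral_monotone_convergence_SUP)
    show "incseq G"
      unfolding G_def by (intro incseq_SucI le_funI ennreal_leI real_sqrt_le_mono) simp
  qed (unfold G_def, measurable)
  also have "\<dots> \<le> ennreal (7 * (C1 * sqrt s + C2)) * sqfun_norm f"
    unfolding G_def by (intro SUP_least partial_ind_norm_le)
  finally show ?thesis .
qed

end

theorem theorem2p5:
  shows "\<exists>c::real. c > 0 \<and>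
    (\<forall>(mk::nat \<Rightarrow> nat) (s::nat) (T::nat \<Rightarrow> (real \<Rightarrow> real) \<Rightarrow> (real \<Rightarrow> real)) (C1::real) (C2::real).
      (\<forall>k\<ge>1. mk k < mk (Suc k)) \<and> C1 \<ge> 0 \<and> C2 \<ge> 0 \<and>
      (\<forall>k\<ge>1. sublinear_on (dyadic_meas (mk k)) (T k)) \<and>
      (\<forall>k\<ge>1. \<forall>f. dyadic_meas (mk k) f \<longrightarrow> T k f \<in> borel_measurable unitI) \<and>
      (\<forall>k\<ge>1. \<forall>f. dyadic_meas (mk k) f \<longrightarrow> L1n (T k f) \<le> ennreal C1 * L1n f) \<and>
      (\<forall>k\<ge>1. \<forall>f (m::nat) (i::nat) (j::nat).
          dyadic_meas (mk k) f \<and> i < 2 ^ m \<and>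
          (\<forall>x\<in>{0..1}. f x \<noteq> 0 \<longrightarrow> x \<in> dyadic_int m i) \<and>
          1 \<le> j \<and> m \<le> mk j \<and> j + s \<le> k
          \<longrightarrow> L2n (T k f) \<le> ennreal (C2 * sqrt (1 / 2 ^ m)) * L2n f)
      \<longrightarrow> (\<forall>f::nat \<Rightarrow> real \<Rightarrow> real. (\<forall>k\<ge>1. dyadic_meas (mk k) (f k)) \<longrightarrow>
             ind_norm (\<lambda>k. T k (f k)) \<le> ennreal (c * (C1 * sqrt (real s) + C2)) * sqfun_norm f))"
proof (intro exI[of _ 7] conjI allI impI, goal_cases)
  case (2 mk s T C1 C2 f)
  then interpret dyadic_sublinear_family mk s T C1 C2 f
    by unfold_locales blast+
  show ?case by (rule ind_norm_le)
qed simp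

end
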